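(* Let $\lambda$ be a Borel measure on $\mathbb{S}^{n-1}$ which is absolutely continuous with respect to spherical Lebesgue measure, and let $K,L\in\mathcal{K}^n_0$. Then for $p\neq0$, $$\frac{d}{dt}G(K\hat{+}_p t\cdot L)\Big|_{t=0}=\frac{1}{p}\int_{\mathbb{S}^{n-1}}\rho_L^{-p}(u)\,d\lambda_p(K,u),$$ and for $p=0$, $$\frac{d}{dt}G(K\hat{+}_0 t\cdot L)\Big|_{t=0}=-\int_{\mathbb{S}^{n-1}}\log\rho_L(u)\,d\lambda(K,u).$$
   Context: $\mathcal{K}^n_0$ is the set of compact convex subsets of $\mathbb{R}^n$ containing the origin in their interior. For $K\in\mathcal{K}^n_0$: $h_K(x)=\max_{y\in K}\langle y,x\rangle$, $\rho_K(u)=\max\{t>0:tu\in K\}$, and the polar body is $K^*=\bigcap_{y\in K}\{x:\langle x,y\rangle\le1\}$. For a closed set $\Omega\subset\mathbb{S}^{n-1}$ not contained in any closed hemisphere and a continuous $h:\Omega\to(0,\infty)$, the Wulff shape is $[h]=\bigcap_{x\in\Omega}\{y\in\mathbb{R}^n:\langle x,y\rangle\le h(x)\}$. For $t$ with $|t|$ small, the $L_p$ Minkowski combination is $K+_p t\cdot L=[(h_K^p+t h_L^p)^{1/p}]$ for $p\neq0$ and $K+_0 t\cdot L=[h_K h_L^t]$, and the $L_p$ harmonic combination is $K\hat{+}_p t\cdot L=(K^*+_p t\cdot L^* )^*$. The general entropy is $G(K)=-\int_{\mathbb{S}^{n-1}}\log h_K(x)\,d\lambda(x)$. The radial Gauss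 image of $\omega\subset\mathbb{S}^{n-1}$ is $\boldsymbol{\alpha}_K(\omega)=\{x\in\mathbb{S}^{n-1}:\langle\rho_K(u)u,x\rangle=h_K(x)\text{ for some }u\in\omega\}$; the Gauss image measure is $\lambda(K,\omega)=\lambda(\boldsymbol{\alpha}_K(\omega))$, and the $L_p$ Gauss image measure is given by $d\lambda_p(K,\cdot)=\rho_K^p\,d\lambda(K,\cdot)$. *)

theory Defs
  imports "HOL-Analysis.Analysis"
begin

definition convex_body0 :: "'a::euclidean_space set \<Rightarrow> bool" where
  "convex_body0 K \<longleftrightarrow> compact K \<and> convex K \<and> 0 \<in> interior K"

definition supp :: "'a::euclidean_space set \<Rightarrow> 'a \<Rightarrow> real" where
  "supp K x = (SUP y\<in>K. y \<bullet> x)"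

definition radial :: "'a::euclidean_space set \<Rightarrow> 'a \<Rightarrow> real" where
  "radial K u = Sup {t. t > 0 \<and> t *\<^sub>R u \<in> K}"

definition polar :: "'a::euclidean_space set \<Rightarrow> 'a set" where
  "polar K = (\<Inter>y\<in>K. {x. x \<bullet> y \<le> 1})"

definition wulff :: "'a::euclidean_space set \<Rightarrow> ('a \<Rightarrow> real) \<Rightarrow> 'a set" where
  "wulff \<Omega> h = (\<Inter>x\<in>\<Omega>. {y. x \<bullet> y \<le> h x})"

definition lp_comb :: "real \<Rightarrow> 'a::euclidean_space set \<Rightarrow> real \<Rightarrow> 'a set \<Rightarrow> 'a set" where
  "lp_comb p K t L =
     (if p \<noteq> 0
      then wulff (sphere 0 1) (\<lambda>x. (supp K x powr p + t * supp L x powr p) powr (1 / p))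
      else wulff (sphere 0 1) (\<lambda>x. supp K x * supp L x powr t))"

definition lp_harm_comb :: "real \<Rightarrow> 'a::euclidean_space set \<Rightarrow> real \<Rightarrow> 'a set \<Rightarrow> 'a set" where
  "lp_harm_comb p K t L = polar (lp_comb p (polar K) t (polar L))"

definition gen_entropy :: "'a::euclidean_space measure \<Rightarrow> 'a set \<Rightarrow> real" where
  "gen_entropy M K = - (\<integral>x. ln (supp K x) \<partial>M)"

definition radial_gauss_image :: "'a::euclidean_space set \<Rightarrow> 'a set \<Rightarrow> 'a set" where
  "radial_gauss_image K \<omega> =
     {x \<in> sphere 0 1. \<exists>u\<in>\<omega>. (radial K u *\<^sub>R u) \<bullet> x = supp K x}"

definition sphere_borel :: "'a::euclidean_space measure" where
  "sphere_borel = restrict_space borel (sphere 0 1)"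

text \<open>Spherical Lebesgue measure, via the cone-volume formula
  sigma(A) = n * vol({t u : u in A, 0 < t <= 1}).\<close>
definition sphere_cone :: "'a::euclidean_space set \<Rightarrow> 'a set" where
  "sphere_cone A = {t *\<^sub>R u |t u. 0 < t \<and> t \<le> 1 \<and> u \<in> A}"

definition spherical_lebesgue :: "'a::euclidean_space measure" where
  "spherical_lebesgue =
     measure_of (sphere 0 1) (sets sphere_borel)
       (\<lambda>A. of_nat DIM('a) * emeasure lebesgue (sphere_cone A))"

text \<open>Gauss image measure lambda(K, omega) = lambda(alpha_K(omega)); the
  measure of alpha_K(omega) is taken in the completion of lambda (alpha_K(omega)
  is Lebesgue measurable for Borel omega).\<close>
definition gauss_image_measure :: "'a::euclidean_space measure \<Rightarrow> 'a set \<Rightarrow> 'a measure" where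
  "gauss_image_measure M K =
     measure_of (space M) (sets M) (\<lambda>\<omega>. emeasure (completion M) (radial_gauss_image K \<omega>))"

definition lp_gauss_image_measure :: "real \<Rightarrow> 'a::euclidean_space measure \<Rightarrow> 'a set \<Rightarrow> 'a measure" where
  "lp_gauss_image_measure p M K =
     density (gauss_image_measure M K) (\<lambda>u. ennreal (radial K u powr p))"

end

(* For a convex body K and a positive function h on the sphere, the support function of the
   polar of the Wulff shape [h] is  h_{[h]*}(v) = max_x (x . v) / h(x).  Both harmonic
   combinations are such polars, for a family h_t with  ln h_t = - ln rho_K + t g + O(t^2)
   uniformly, where g = rho_K^p rho_L^-p / p, resp. g = - ln rho_L.  At t = 0 the maximum is
   attained exactly at the radial point of K lying in the support hyperplane with normal v; for
   every direction v outside the Lebesgue-null set of normals of non-singleton faces this point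
   is unique, its direction being alpha*_K(v).  Danskin's envelope argument then gives
   d/dt ln h_{[h_t]*}(v) = - g(alpha*_K(v)) at t = 0, with difference quotients bounded uniformly
   in v, so by dominated convergence dG/dt = int g(alpha*_K(v)) d lambda(v).  Absolute continuity
   of lambda makes the push-forward of lambda under alpha*_K equal to the Gauss image measure
   lambda(K, .), which turns this integral into one against lambda_p(K, .), resp. lambda(K, .). *)
theory Submission
  imports Defs
begin

lemma bdd_above_inner_image:
  fixes B :: "'a::euclidean_space set"
  assumes "B \<subseteq> cball 0 R"
  shows "bdd_above ((\<lambda>y. y \<bullet> x) ` B)"
proof (rule bdd_aboveI2)
  fix y assume "y \<in> B"
  have "y \<bullet> x \<le> norm y * norm x" by (rule norm_cauchy_schwarz)
  also have "\<dots> \<le> R * norm x" using assms \<open>y \<in> B\<close> by (auto intro!: mult_right_mono)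
  finally show "y \<bullet> x \<le> R * norm x" .
qed

lemma inner_le_supp:
  fixes B :: "'a::euclidean_space set"
  assumes "B \<subseteq> cball 0 R" "y \<in> B"
  shows "y \<bullet> x \<le> supp B x"
  unfolding supp_def by (rule cSUP_upper[OF assms(2) bdd_above_inner_image[OF assms(1)]])

lemma supp_le:
  fixes B :: "'a::euclidean_space set"
  assumes "B \<noteq> {}" "\<And>y. y \<in> B \<Longrightarrow> y \<bullet> x \<le> c"
  shows "supp B x \<le> c"
  unfolding supp_def using assms by (intro cSUP_least) auto

lemma supp_le_supp_add:
  fixes B :: "'a::euclidean_space set"
  assumes "B \<subseteq> cball 0 R" "B \<noteq> {}"
  shows "supp B x \<le> supp B z + R * norm (x - z)"
proof (rule supp_le[OF assms(2)])
  fix y assume y: "y \<in> B"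
  have "y \<bullet> x = y \<bullet> z + y \<bullet> (x - z)" by (simp add: inner_diff_right)
  also have "y \<bullet> (x - z) \<le> norm y * norm (x - z)" by (rule norm_cauchy_schwarz)
  also have "\<dots> \<le> R * norm (x - z)" using assms y by (auto intro!: mult_right_mono)
  finally show "y \<bullet> x \<le> supp B z + R * norm (x - z)"
    using inner_le_supp[OF assms(1) y, of z] by linarith
qed

lemma continuous_on_supp:
  fixes B :: "'a::euclidean_space set"
  assumes "B \<subseteq> cball 0 R" "B \<noteq> {}"
  shows "continuous_on A (supp B)"
proof (rule lipschitz_on_continuous_on[OF lipschitz_onI])
  obtain y where "y \<in> B" using assms(2) by blast
  then show "0 \<le> R" using assms(1) norm_ge_zero[of y] by (auto simp del: norm_ge_zero)
  fix x z
  show "dist (supp B x) (supp B z) \<le> R * dist x z"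
    using supp_le_supp_add[OF assms, of x z] supp_le_supp_add[OF assms, of z x]
    by (simp add: dist_real_def dist_norm norm_minus_commute abs_le_iff)
qed

lemma supp_attained:
  fixes B :: "'a::euclidean_space set"
  assumes "compact B" "B \<noteq> {}"
  obtains y where "y \<in> B" "supp B x = y \<bullet> x"
proof -
  obtain R where R: "B \<subseteq> cball 0 R"
    using bounded_subset_ballD[OF compact_imp_bounded[OF assms(1)], of 0] ball_subset_cball by blast
  obtain y where y: "y \<in> B" "\<And>z. z \<in> B \<Longrightarrow> z \<bullet> x \<le> y \<bullet> x"
    using continuous_attains_sup[OF assms continuous_on_inner[OF continuous_on_id continuous_on_const]]
    by blast
  have "supp B x = y \<bullet> x"
    using inner_le_supp[OF R y(1)] supp_le[OF assms(2) y(2)] by (meson order.antisym)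
  with y show ?thesis using that by blast
qed

lemma supp_scaleR:
  fixes B :: "'a::euclidean_space set"
  assumes "B \<subseteq> cball 0 R" "B \<noteq> {}" "a > 0"
  shows "supp B (a *\<^sub>R v) = a * supp B v"
proof (rule order.antisym)
  show "supp B (a *\<^sub>R v) \<le> a * supp B v"
  proof (rule supp_le[OF assms(2)])
    fix y assume "y \<in> B"
    then have "a * (y \<bullet> v) \<le> a * supp B v"
      using inner_le_supp[OF assms(1)] assms(3) by (intro mult_left_mono) auto
    then show "y \<bullet> (a *\<^sub>R v) \<le> a * supp B v" by simp
  qed
  have "supp B v \<le> supp B (a *\<^sub>R v) / a"
  proof (rule supp_le[OF assms(2)])
    fix y assume "y \<in> B"
    then have "a * (y \<bullet> v) \<le> supp B (a *\<^sub>R v)"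
      using inner_le_supp[OF assms(1), of y "a *\<^sub>R v"] by simp
    then show "y \<bullet> v \<le> supp B (a *\<^sub>R v) / a" using assms(3) by (simp add: pos_le_divide_eq mult.commute)
  qed
  then show "a * supp B v \<le> supp B (a *\<^sub>R v)" using assms(3) by (simp add: pos_le_divide_eq mult.commute)
qed

lemma scaleR_unit_mem_cball:
  fixes x :: "'a::real_normed_vector"
  assumes "x \<noteq> 0" "r > 0"
  shows "(r / norm x) *\<^sub>R x \<in> cball 0 r"
  using assms by simp

lemma inner_scaleR_unit_self:
  fixes x :: "'a::real_inner"
  shows "((r / norm x) *\<^sub>R x) \<bullet> x = r * norm x"
  by (cases "x = 0") (simp_all add: power2_norm_eq_inner[symmetric] power2_eq_square)

locale convex_body_balls =
  fixes K :: "'a::euclidean_space set" and r R :: real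
  assumes body: "convex_body0 K" and r_pos: "0 < r"
    and inner_ball: "cball 0 r \<subseteq> K" and outer_ball: "K \<subseteq> cball 0 R"
begin

lemma K_compact: "compact K" and K_convex: "convex K" and zero_in_interior: "0 \<in> interior K"
  using body by (auto simp: convex_body0_def)

lemma K_nonempty: "K \<noteq> {}"
  using zero_in_interior interior_subset by blast

lemma inner_le_supp_K: "y \<in> K \<Longrightarrow> y \<bullet> x \<le> supp K x"
  using inner_le_supp[OF outer_ball] by blast

lemma continuous_on_supp_K: "continuous_on A (supp K)"
  using continuous_on_supp[OF outer_ball K_nonempty] by blast

lemma supp_ge_inner_radius: "r * norm x \<le> supp K x"
proof (cases "x = 0")
  case True
  have "0 \<in> K" using zero_in_interior interior_subset by blast
  then show ?thesis using True inner_le_supp_K[of 0 x] by simp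
next
  case False
  have "(r / norm x) *\<^sub>R x \<in> K" using scaleR_unit_mem_cball[OF False r_pos] inner_ball by blast
  from inner_le_supp_K[OF this, of x] show ?thesis using inner_scaleR_unit_self[of r x] by linarith
qed

lemma supp_pos: "x \<noteq> 0 \<Longrightarrow> 0 < supp K x"
proof -
  assume "x \<noteq> 0"
  then have "0 < r * norm x" using r_pos by simp
  then show ?thesis using supp_ge_inner_radius[of x] by linarith
qed

lemma supp_pos_sphere: assumes "x \<in> sphere 0 1" shows "0 < supp K x"
proof -
  have "x \<noteq> 0" using assms by auto
  then show ?thesis by (rule supp_pos)
qed

lemma bdd_above_radial_set:
  assumes "u \<in> sphere 0 1" shows "bdd_above {t. t > 0 \<and> t *\<^sub>R u \<in> K}"
proof (rule bdd_aboveI)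
  fix t assume "t \<in> {t. t > 0 \<and> t *\<^sub>R u \<in> K}"
  then show "t \<le> R" using outer_ball assms by (auto simp: subset_iff)
qed

lemma r_mem_radial_set: "u \<in> sphere 0 1 \<Longrightarrow> r \<in> {t. t > 0 \<and> t *\<^sub>R u \<in> K}"
  using r_pos inner_ball by (auto simp: subset_iff)

lemma le_radial: "0 < t \<Longrightarrow> t *\<^sub>R u \<in> K \<Longrightarrow> u \<in> sphere 0 1 \<Longrightarrow> t \<le> radial K u"
  unfolding radial_def by (rule cSup_upper) (auto intro: bdd_above_radial_set)

lemma radial_pos: "u \<in> sphere 0 1 \<Longrightarrow> 0 < radial K u"
  using le_radial[of r u] r_mem_radial_set[of u] r_pos by auto

lemma radial_le_outer_radius: "u \<in> sphere 0 1 \<Longrightarrow> radial K u \<le> R"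
  unfolding radial_def using r_mem_radial_set outer_ball by (intro cSup_least) (auto simp: subset_iff)

lemma radial_point_mem: assumes u: "u \<in> sphere 0 1" shows "radial K u *\<^sub>R u \<in> K"
proof (rule ccontr)
  let ?T = "{t. t > 0 \<and> t *\<^sub>R u \<in> K}"
  let ?s = "radial K u"
  assume "?s *\<^sub>R u \<notin> K"
  moreover have "open (- K)" using K_compact compact_imp_closed by blast
  ultimately obtain e where e: "e > 0" "ball (?s *\<^sub>R u) e \<subseteq> - K"
    using open_contains_ball by blast
  have "?s - e < Sup ?T" using e by (simp add: radial_def)
  then obtain t where t: "t \<in> ?T" "?s - e < t"
    using less_cSup_iff[of ?T "?s - e"] bdd_above_radial_set[OF u] r_mem_radial_set[OF u] by blast
  have "t \<le> ?s" using le_radial t u by auto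
  have "dist (?s *\<^sub>R u) (t *\<^sub>R u) = \<bar>?s - t\<bar>"
    using u by (simp add: dist_norm scaleR_diff_left[symmetric])
  also have "\<dots> < e" using t \<open>t \<le> ?s\<close> by linarith
  finally have "t *\<^sub>R u \<in> ball (?s *\<^sub>R u) e" by (simp only: mem_ball)
  then have "t *\<^sub>R u \<in> - K" using e(2) by blast
  then show False using t by auto
qed

lemma radial_point_not_interior: assumes u: "u \<in> sphere 0 1"
  shows "radial K u *\<^sub>R u \<notin> interior K"
proof
  assume "radial K u *\<^sub>R u \<in> interior K"
  then obtain e where e: "e > 0" "ball (radial K u *\<^sub>R u) e \<subseteq> K"
    using mem_interior by blast
  have "dist (radial K u *\<^sub>R u) ((radial K u + e/2) *\<^sub>R u) = e/2"
    using u e by (simp add: dist_norm scaleR_diff_left[symmetric] algebra_simps)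
  then have "(radial K u + e/2) *\<^sub>R u \<in> K" using e by auto
  moreover have "0 < radial K u + e/2" using radial_pos[OF u] e by linarith
  ultimately have "radial K u + e/2 \<le> radial K u" using le_radial u by blast
  then show False using e by linarith
qed

lemma norm_le_radial: assumes "y \<in> K" "y \<noteq> 0"
  shows "norm y \<le> radial K (y /\<^sub>R norm y)"
proof -
  have "norm y *\<^sub>R (y /\<^sub>R norm y) = y" using assms by simp
  then show ?thesis using le_radial[of "norm y" "y /\<^sub>R norm y"] assms by simp
qed

lemma polar_subset_cball: "polar K \<subseteq> cball 0 (1/r)"
proof
  fix z assume z: "z \<in> polar K"
  show "z \<in> cball 0 (1/r)"
  proof (cases "z = 0")
    case False
    have "(r / norm z) *\<^sub>R z \<in> K" using scaleR_unit_mem_cball[OF False r_pos] inner_ball by blast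
    then have "z \<bullet> ((r / norm z) *\<^sub>R z) \<le> 1" using z by (auto simp: polar_def)
    then have "r * norm z \<le> 1" using inner_scaleR_unit_self[of r z] by (simp add: inner_commute)
    then show ?thesis using r_pos by (simp add: field_simps)
  qed (use r_pos in simp)
qed

lemma polar_nonempty: "polar K \<noteq> {}"
proof -
  have "0 \<in> polar K" by (simp add: polar_def)
  then show ?thesis by blast
qed

lemma continuous_on_supp_polar: "continuous_on A (supp (polar K))"
  using continuous_on_supp[OF polar_subset_cball polar_nonempty] .

text \<open>The inequality \<open>\<ge>\<close> comes from a supporting hyperplane of \<open>K\<close> at its boundary point
  \<open>\<rho>\<^sub>K(u) u\<close>.\<close>
lemma supp_polar: assumes u: "u \<in> sphere 0 1"
  shows "supp (polar K) u = 1 / radial K u"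
proof (rule order.antisym)
  let ?s = "radial K u"
  have s: "?s > 0" using radial_pos[OF u] .
  show "supp (polar K) u \<le> 1 / ?s"
  proof (rule supp_le[OF polar_nonempty])
    fix z assume "z \<in> polar K"
    then have "z \<bullet> (?s *\<^sub>R u) \<le> 1" using radial_point_mem[OF u] by (auto simp: polar_def)
    then show "z \<bullet> u \<le> 1 / ?s" using s by (simp add: field_simps)
  qed
  have mem: "?s *\<^sub>R u \<in> closure K" using radial_point_mem[OF u] closure_subset by blast
  have "interior K \<noteq> {}" using zero_in_interior by blast
  then have "?s *\<^sub>R u \<notin> rel_interior K"
    using radial_point_not_interior[OF u] by (simp add: rel_interior_nonempty_interior)
  then obtain a where a: "a \<noteq> 0" "\<And>y. y \<in> closure K \<Longrightarrow> a \<bullet> (?s *\<^sub>R u) \<le> a \<bullet> y"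
    using supporting_hyperplane_relative_frontier[OF K_convex mem] by metis
  define w where "w = - a"
  have w0: "w \<noteq> 0" using a by (simp add: w_def)
  have wy: "w \<bullet> y \<le> w \<bullet> (?s *\<^sub>R u)" if "y \<in> K" for y
    using a(2)[of y] that closure_subset by (auto simp: w_def)
  have "(r / norm w) *\<^sub>R w \<in> K" using scaleR_unit_mem_cball[OF w0 r_pos] inner_ball by blast
  from wy[OF this] have "r * norm w \<le> w \<bullet> (?s *\<^sub>R u)"
    using inner_scaleR_unit_self[of r w] by (simp add: inner_commute)
  moreover have "0 < r * norm w" using r_pos w0 by simp
  ultimately have pos: "w \<bullet> (?s *\<^sub>R u) > 0" by linarith
  define z where "z = (1 / (w \<bullet> (?s *\<^sub>R u))) *\<^sub>R w"
  have "w \<bullet> u \<noteq> 0" using pos by auto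
  then have zu: "z \<bullet> u = 1 / ?s" using s by (simp add: z_def field_simps)
  have "z \<in> polar K"
    unfolding polar_def z_def using wy pos by (auto simp: field_simps)
  then have "z \<bullet> u \<le> supp (polar K) u" using inner_le_supp[OF polar_subset_cball] by blast
  then show "1 / ?s \<le> supp (polar K) u" using zu by simp
qed

lemma supp_polar_pos: "u \<in> sphere 0 1 \<Longrightarrow> 0 < supp (polar K) u"
  using supp_polar radial_pos by simp

lemma continuous_on_radial: "continuous_on (sphere 0 1) (radial K)"
proof -
  have "continuous_on (sphere 0 1) (\<lambda>u. 1 / supp (polar K) u)"
    using supp_polar_pos by (intro continuous_on_divide continuous_on_const continuous_on_supp_polar) force
  then show ?thesis
    by (rule continuous_on_cong[THEN iffD1, rotated 2]) (auto simp: supp_polar radial_pos)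
qed

end

lemma convex_body_balls_exists:
  fixes K :: "'a::euclidean_space set"
  assumes "convex_body0 K"
  obtains r R where "convex_body_balls K r R"
proof -
  from assms have "0 \<in> interior K" "compact K" by (auto simp: convex_body0_def)
  then obtain e where e: "e > 0" "ball 0 e \<subseteq> K" by (meson mem_interior)
  obtain R where R: "K \<subseteq> cball 0 R"
    using bounded_subset_ballD[OF compact_imp_bounded[OF \<open>compact K\<close>], of 0] ball_subset_cball by blast
  have "cball 0 (e/2) \<subseteq> K" using e by (intro subset_trans[OF _ e(2)]) (auto simp: subset_iff)
  with assms e R show ?thesis by (intro that convex_body_balls.intro) auto
qed

lemma wulff_cong: "(\<And>x. x \<in> \<Omega> \<Longrightarrow> h x = h' x) \<Longrightarrow> wulff \<Omega> h = wulff \<Omega> h'"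
  unfolding wulff_def by auto

locale wulff_bounded_below =
  fixes h :: "'a::euclidean_space \<Rightarrow> real" and c :: real
  assumes c_pos: "c > 0" and c_le_h: "\<And>x. x \<in> sphere 0 1 \<Longrightarrow> c \<le> h x"
begin

lemma h_pos: "x \<in> sphere 0 1 \<Longrightarrow> 0 < h x"
  using c_le_h c_pos by fastforce

lemma cball_subset_wulff: "cball 0 c \<subseteq> wulff (sphere 0 1) h"
proof
  fix y :: 'a assume y: "y \<in> cball 0 c"
  have "x \<bullet> y \<le> h x" if x: "x \<in> sphere 0 1" for x
  proof -
    have "x \<bullet> y \<le> norm x * norm y" by (rule norm_cauchy_schwarz)
    also have "\<dots> \<le> c" using x y by simp
    finally show ?thesis using c_le_h[OF x] by linarith
  qed
  then show "y \<in> wulff (sphere 0 1) h" by (auto simp: wulff_def)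
qed

lemma polar_wulff_subset_cball: "polar (wulff (sphere 0 1) h) \<subseteq> cball 0 (1/c)"
proof
  fix z assume z: "z \<in> polar (wulff (sphere 0 1) h)"
  show "z \<in> cball 0 (1/c)"
  proof (cases "z = 0")
    case False
    have "(c / norm z) *\<^sub>R z \<in> wulff (sphere 0 1) h"
      using scaleR_unit_mem_cball[OF False c_pos] cball_subset_wulff by blast
    then have "z \<bullet> ((c / norm z) *\<^sub>R z) \<le> 1" using z by (auto simp: polar_def)
    then have "c * norm z \<le> 1" using inner_scaleR_unit_self[of c z] by (simp add: inner_commute)
    then show ?thesis using c_pos by (simp add: field_simps)
  qed (use c_pos in simp)
qed

lemma polar_wulff_nonempty: "polar (wulff (sphere 0 1) h) \<noteq> {}"
proof -
  have "0 \<in> polar (wulff (sphere 0 1) h)" by (simp add: polar_def)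
  then show ?thesis by blast
qed

lemma continuous_on_supp_polar_wulff: "continuous_on A (supp (polar (wulff (sphere 0 1) h)))"
  using continuous_on_supp[OF polar_wulff_subset_cball polar_wulff_nonempty] .

lemma supp_polar_wulff_ge:
  assumes "x \<in> sphere 0 1"
  shows "(x \<bullet> v) / h x \<le> supp (polar (wulff (sphere 0 1) h)) v"
proof -
  have "(1 / h x) *\<^sub>R x \<in> polar (wulff (sphere 0 1) h)"
    using assms h_pos[OF assms] by (auto simp: polar_def wulff_def field_simps)
  from inner_le_supp[OF polar_wulff_subset_cball this, of v] show ?thesis by simp
qed

lemma supp_polar_wulff_le:
  assumes U: "\<And>x. x \<in> sphere 0 1 \<Longrightarrow> (x \<bullet> v) / h x \<le> U"
  shows "supp (polar (wulff (sphere 0 1) h)) v \<le> U"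
proof (cases "v = 0")
  case True
  obtain b :: 'a where "b \<in> Basis" using nonempty_Basis by blast
  then have "0 \<le> U" using U[of b] True by simp
  moreover have "supp (polar (wulff (sphere 0 1) h)) v \<le> 0"
    using True by (intro supp_le[OF polar_wulff_nonempty]) auto
  ultimately show ?thesis by linarith
next
  case False
  have vS: "v /\<^sub>R norm v \<in> sphere 0 1" using False by simp
  have "(v /\<^sub>R norm v) \<bullet> v = norm v"
    using False by (simp add: power2_norm_eq_inner[symmetric] power2_eq_square)
  then have "0 < (v /\<^sub>R norm v) \<bullet> v / h (v /\<^sub>R norm v)" using False h_pos[OF vS] by simp
  with U[OF vS] have U_pos: "U > 0" by linarith
  have "x \<bullet> ((1 / U) *\<^sub>R v) \<le> h x" if x: "x \<in> sphere 0 1" for x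
    using U[OF x] h_pos[OF x] U_pos by (simp add: field_simps)
  then have "(1 / U) *\<^sub>R v \<in> wulff (sphere 0 1) h" by (auto simp: wulff_def)
  then show ?thesis
    using U_pos by (intro supp_le[OF polar_wulff_nonempty]) (auto simp: polar_def field_simps)
qed

lemma supp_polar_wulff_pos:
  assumes "v \<in> sphere 0 1"
  shows "0 < supp (polar (wulff (sphere 0 1) h)) v"
proof -
  have "0 < (v \<bullet> v) / h v"
    using assms h_pos[OF assms] by (simp add: power2_norm_eq_inner[symmetric])
  with supp_polar_wulff_ge[OF assms, of v] show ?thesis by linarith
qed

end

section \<open>Faces and singular directions\<close>

definition face :: "'a::euclidean_space set \<Rightarrow> 'a \<Rightarrow> 'a set" where
  "face K v = {y \<in> K. y \<bullet> v = supp K v}"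

definition wide_face_dirs :: "'a::euclidean_space set \<Rightarrow> 'a \<Rightarrow> 'a set" where
  "wide_face_dirs K b = {v. \<exists>y1\<in>face K v. \<exists>y2\<in>face K v. y1 \<bullet> b < y2 \<bullet> b}"

text \<open>A direction is singular iff its face is not a point; splitting by the coordinate directions \<open>b\<close>
  gives Borel pieces that meet every line parallel to \<open>b\<close> in a countable set.\<close>
definition singular_dirs :: "'a::euclidean_space set \<Rightarrow> 'a set" where
  "singular_dirs K = (\<Union>b\<in>Basis. wide_face_dirs K b)"

text \<open>Fubini for \<open>1\<^sub>T(x + s e)\<close>, \<open>0 \<le> s \<le> 1\<close>: integrating over \<open>s\<close> first gives \<open>0\<close>, over \<open>x\<close> first
  the measure of \<open>T\<close>.\<close>
lemma lborel_null_if_countable_on_lines: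
  fixes T :: "'a::euclidean_space set" and e :: 'a
  assumes T: "T \<in> sets borel" and countable: "\<And>x. countable {s::real. x + s *\<^sub>R e \<in> T}"
  shows "emeasure lborel T = 0"
proof -
  define g where "g z = (indicator T (fst z + snd z *\<^sub>R e) * indicator {0..1} (snd z) :: ennreal)"
    for z :: "'a \<times> real"
  have g: "g \<in> borel_measurable (lborel \<Otimes>\<^sub>M lborel)"
    unfolding g_def using T by measurable
  have lines: "(\<integral>\<^sup>+s. g (x, s) \<partial>lborel) = 0" for x
  proof -
    let ?C = "{s::real. x + s *\<^sub>R e \<in> T}"
    have "(\<integral>\<^sup>+s. g (x, s) \<partial>lborel) \<le> (\<integral>\<^sup>+s. indicator ?C s \<partial>lborel)"
      unfolding g_def by (intro nn_integral_mono) (simp add: indicator_def)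
    also have "\<dots> = emeasure lborel ?C"
      by (rule nn_integral_indicator[OF sets.countable[OF _ countable]]) simp
    also have "\<dots> = 0" using emeasure_lborel_countable[OF countable] .
    finally show ?thesis by simp
  qed
  have translates: "(\<integral>\<^sup>+x. g (x, s) \<partial>lborel) = emeasure lborel T * indicator {0..1} s" for s
  proof -
    have m: "(\<lambda>x. indicator T (s *\<^sub>R e + x) :: ennreal) \<in> borel_measurable lborel"
      using T by measurable
    have "(\<integral>\<^sup>+x. g (x, s) \<partial>lborel) = (\<integral>\<^sup>+x. indicator T (s *\<^sub>R e + x) * indicator {0..1} s \<partial>lborel)"
      unfolding g_def by (simp add: add.commute)
    also have "\<dots> = (\<integral>\<^sup>+x. indicator T (s *\<^sub>R e + x) \<partial>lborel) * indicator {0..1} s"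
      by (rule nn_integral_multc[OF m])
    also have "(\<integral>\<^sup>+x. indicator T (s *\<^sub>R e + x) \<partial>lborel)
        = integral\<^sup>N (distr lborel borel ((+) (s *\<^sub>R e))) (indicator T)"
      using T by (subst nn_integral_distr) auto
    also have "\<dots> = emeasure lborel T" using T by (simp add: lborel_distr_plus)
    finally show ?thesis .
  qed
  have "pair_sigma_finite (lborel :: 'a measure) (lborel :: real measure)"
    by (simp add: pair_sigma_finite_def lborel.sigma_finite_measure_axioms)
  then have "0 = (\<integral>\<^sup>+s. \<integral>\<^sup>+x. g (x, s) \<partial>lborel \<partial>lborel)"
    using lborel.nn_integral_fst[OF g] pair_sigma_finite.nn_integral_snd[OF _ g] lines by simp
  also have "\<dots> = (\<integral>\<^sup>+s. emeasure lborel T * indicator {0..1::real} s \<partial>lborel)"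
    by (intro nn_integral_cong translates)
  also have "\<dots> = emeasure lborel T * emeasure lborel {0..1::real}"
    by (subst nn_integral_cmult_indicator) auto
  finally show ?thesis by simp
qed

context convex_body_balls
begin

lemma face_nonempty: "face K v \<noteq> {}"
proof -
  obtain y where "y \<in> K" "supp K v = y \<bullet> v"
    using supp_attained[OF K_compact K_nonempty] by blast
  then have "y \<in> face K v" by (simp add: face_def)
  then show ?thesis by blast
qed

lemma face_scaleR: assumes "a > 0" shows "face K (a *\<^sub>R v) = face K v"
  using supp_scaleR[OF outer_ball K_nonempty assms] assms by (simp add: face_def)

lemma face_singleton:
  assumes "v \<notin> singular_dirs K" "y1 \<in> face K v" "y2 \<in> face K v"
  shows "y1 = y2"
proof (rule euclidean_eqI)
  fix b :: 'a assume "b \<in> Basis"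
  then have "v \<notin> wide_face_dirs K b" using assms(1) by (auto simp: singular_dirs_def)
  then show "y1 \<bullet> b = y2 \<bullet> b"
    using assms(2,3) unfolding wide_face_dirs_def
    by (metis (no_types, lifting) mem_Collect_eq linorder_neqE_linordered_idom)
qed

lemma zero_singular: "0 \<in> singular_dirs K"
proof -
  obtain b :: 'a where b: "b \<in> Basis" using nonempty_Basis by blast
  have "r *\<^sub>R b \<in> K" "(- r) *\<^sub>R b \<in> K" using inner_ball r_pos b by (auto simp: subset_iff)
  moreover have "supp K 0 = 0"
    using inner_le_supp_K[OF \<open>r *\<^sub>R b \<in> K\<close>, of 0] supp_le[OF K_nonempty, of 0 0] by simp
  ultimately have "r *\<^sub>R b \<in> face K 0" "(- r) *\<^sub>R b \<in> face K 0" by (auto simp: face_def)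
  moreover have "((- r) *\<^sub>R b) \<bullet> b < (r *\<^sub>R b) \<bullet> b" using b r_pos by simp
  ultimately have "0 \<in> wide_face_dirs K b" unfolding wide_face_dirs_def by blast
  then show ?thesis using b by (auto simp: singular_dirs_def)
qed

text \<open>The face width in direction \<open>b\<close> is at least \<open>1/(m+1)\<close> on a closed set, being the
  projection of a closed subset of \<open>(K \<times> K) \<times> \<real>\<^sup>n\<close> along the compact factor.\<close>
lemma wide_face_dirs_borel: "wide_face_dirs K b \<in> sets borel"
proof -
  define P where "P m = {v. \<exists>y. y \<in> K \<times> K \<and> (y, v) \<in>
      {(y, v). fst y \<bullet> v = supp K v \<and> snd y \<bullet> v = supp K v \<and> 1 / Suc m \<le> snd y \<bullet> b - fst y \<bullet> b}}"
    for m :: nat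
  have P_closed: "closed (P m)" for m
    unfolding P_def
  proof (rule closed_compact_projection)
    show "compact (K \<times> K)" using K_compact by (intro compact_Times)
    have "continuous_on UNIV (\<lambda>z::(('a \<times> 'a) \<times> 'a). supp K (snd z))"
      by (rule continuous_on_compose2[OF continuous_on_supp_K continuous_on_snd]) auto
    then have "closed ({z::(('a \<times> 'a) \<times> 'a). fst (fst z) \<bullet> snd z = supp K (snd z)} \<inter>
       {z. snd (fst z) \<bullet> snd z = supp K (snd z)} \<inter> {z. 1 / Suc m \<le> snd (fst z) \<bullet> b - fst (fst z) \<bullet> b})"
      by (intro closed_Int closed_Collect_eq closed_Collect_le continuous_intros)
    then show "closed {(y, v). fst y \<bullet> v = supp K v \<and> snd y \<bullet> v = supp K v \<and> 1 / Suc m \<le> snd y \<bullet> b - fst y \<bullet> b}"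
      by (simp add: case_prod_beta' Collect_conj_eq Int_assoc)
  qed
  then have "P m \<in> sets borel" for m by (rule borel_closed)
  moreover have "wide_face_dirs K b = (\<Union>m. P m)"
  proof (intro equalityI subsetI)
    fix v assume "v \<in> wide_face_dirs K b"
    then obtain y1 y2 where y: "y1 \<in> face K v" "y2 \<in> face K v" "y1 \<bullet> b < y2 \<bullet> b"
      by (auto simp: wide_face_dirs_def)
    obtain m :: nat where "inverse (Suc m) < y2 \<bullet> b - y1 \<bullet> b"
      using reals_Archimedean[of "y2 \<bullet> b - y1 \<bullet> b"] y(3) by auto
    then have "v \<in> P m" using y unfolding P_def face_def
      by (intro CollectI exI[of _ "(y1, y2)"]) (auto simp: inverse_eq_divide)
    then show "v \<in> (\<Union>m. P m)" by blast
  next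
    fix v assume "v \<in> (\<Union>m. P m)"
    then obtain m y1 y2 where "y1 \<in> K" "y2 \<in> K" "y1 \<bullet> v = supp K v" "y2 \<bullet> v = supp K v"
      "1 / Suc m \<le> y2 \<bullet> b - y1 \<bullet> b" unfolding P_def by auto
    moreover have "0 < 1 / real (Suc m)" by simp
    ultimately have "y1 \<bullet> b < y2 \<bullet> b" "y1 \<in> face K v" "y2 \<in> face K v"
      by (simp_all only: face_def mem_Collect_eq)
    then show "v \<in> wide_face_dirs K b" unfolding wide_face_dirs_def by blast
  qed
  ultimately show ?thesis by auto
qed

lemma singular_dirs_borel: "singular_dirs K \<in> sets borel"
  unfolding singular_dirs_def
  by (intro sets.countable_UN'' countable_finite[OF finite_Basis]) (auto intro: wide_face_dirs_borel)

lemma face_monotone: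
  assumes "y \<in> face K v" "y' \<in> face K (v + d *\<^sub>R b)" "d > 0"
  shows "y \<bullet> b \<le> y' \<bullet> b"
proof -
  have "y' \<bullet> v \<le> y \<bullet> v" "y \<bullet> (v + d *\<^sub>R b) \<le> y' \<bullet> (v + d *\<^sub>R b)"
    using assms(1,2) inner_le_supp_K by (auto simp: face_def)
  then have "d * (y \<bullet> b) \<le> d * (y' \<bullet> b)" by (simp add: inner_add_right)
  then show ?thesis using assms(3) by simp
qed

text \<open>Along a line in direction \<open>b\<close> the faces move monotonically in direction \<open>b\<close>, so
  the wide faces on the line occupy disjoint open intervals of values, each containing a rational.\<close>
lemma countable_wide_face_dirs_on_line: "countable {s::real. x + s *\<^sub>R b \<in> wide_face_dirs K b}"
proof -
  let ?C = "{s::real. x + s *\<^sub>R b \<in> wide_face_dirs K b}"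
  let ?sep = "\<lambda>s q. q \<in> \<rat> \<and> (\<exists>y1\<in>face K (x + s *\<^sub>R b). \<exists>y2\<in>face K (x + s *\<^sub>R b).
      y1 \<bullet> b < q \<and> q < y2 \<bullet> b)"
  define q where "q s = (SOME q. ?sep s q)" for s
  have q: "?sep s (q s)" if "s \<in> ?C" for s
  proof -
    from that obtain y1 y2 where y: "y1 \<in> face K (x + s *\<^sub>R b)" "y2 \<in> face K (x + s *\<^sub>R b)"
      "y1 \<bullet> b < y2 \<bullet> b"
      by (auto simp: wide_face_dirs_def)
    obtain t where "t \<in> \<rat>" "y1 \<bullet> b < t" "t < y2 \<bullet> b" using Rats_dense_in_real[OF y(3)] by blast
    then have "\<exists>q. ?sep s q" using y by blast
    then show ?thesis unfolding q_def by (rule someI_ex)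
  qed
  have mono: "q s < q s'" if s: "s \<in> ?C" and s': "s' \<in> ?C" and "s < s'" for s s'
  proof -
    obtain y2 where y2: "y2 \<in> face K (x + s *\<^sub>R b)" "q s < y2 \<bullet> b" using q[OF s] by blast
    obtain y1' where y1': "y1' \<in> face K (x + s' *\<^sub>R b)" "y1' \<bullet> b < q s'" using q[OF s'] by blast
    have "x + s' *\<^sub>R b = (x + s *\<^sub>R b) + (s' - s) *\<^sub>R b" by (simp add: algebra_simps)
    with y1'(1) have "y2 \<bullet> b \<le> y1' \<bullet> b"
      using face_monotone[OF y2(1)] \<open>s < s'\<close> by simp
    then show ?thesis using y2 y1' by linarith
  qed
  have "inj_on q ?C"
    by (rule inj_onI) (metis mono less_irrefl linorder_neqE_linordered_idom)
  moreover have "countable (q ` ?C)"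
    using q countable_rat countable_subset[of "q ` ?C" \<rat>] by blast
  ultimately show ?thesis using countable_image_inj_on by blast
qed

lemma singular_dirs_null: "singular_dirs K \<in> null_sets lborel"
proof -
  have "wide_face_dirs K b \<in> null_sets lborel" for b
    using wide_face_dirs_borel
      lborel_null_if_countable_on_lines[OF wide_face_dirs_borel countable_wide_face_dirs_on_line]
    by (auto simp: null_sets_def)
  then show ?thesis unfolding singular_dirs_def
    by (intro null_sets_UN' countable_finite[OF finite_Basis]) auto
qed

lemma sphere_cone_singular_subset: "sphere_cone (singular_dirs K \<inter> sphere 0 1) \<subseteq> singular_dirs K"
proof
  fix z assume "z \<in> sphere_cone (singular_dirs K \<inter> sphere 0 1)"
  then obtain t u where z: "z = t *\<^sub>R u" "0 < t" "u \<in> singular_dirs K"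
    unfolding sphere_cone_def by blast
  then show "z \<in> singular_dirs K"
    using face_scaleR[OF \<open>0 < t\<close>, of u] by (auto simp: singular_dirs_def wide_face_dirs_def)
qed

end

section \<open>The reverse radial Gauss map\<close>

definition face_point :: "'a::euclidean_space set \<Rightarrow> 'a \<Rightarrow> 'a" where
  "face_point K v = (SOME y. y \<in> face K v)"

text \<open>\<open>rev_radial_gauss K\<close> is the reverse radial Gauss map \<open>\<alpha>\<^sup>*\<^sub>K\<close>, defined on regular directions;
  on singular ones it takes an arbitrary unit value.\<close>
definition rev_radial_gauss :: "'a::euclidean_space set \<Rightarrow> 'a \<Rightarrow> 'a" where
  "rev_radial_gauss K v =
     (if v \<in> singular_dirs K then (SOME b. b \<in> Basis) else face_point K v /\<^sub>R norm (face_point K v))"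

lemma space_sphere_borel: "space sphere_borel = sphere 0 1"
  by (simp add: sphere_borel_def space_restrict_space)

lemma sets_spherical_lebesgue: "sets spherical_lebesgue = sets sphere_borel"
proof -
  have "sets sphere_borel \<subseteq> Pow (sphere 0 1)"
    using sets.space_closed[of sphere_borel] by (simp add: space_sphere_borel)
  then have "sets spherical_lebesgue = sigma_sets (sphere 0 1) (sets sphere_borel)"
    unfolding spherical_lebesgue_def by (rule sets_measure_of)
  also have "\<dots> = sets sphere_borel"
    using sets.sigma_sets_eq[of sphere_borel] by (simp add: space_sphere_borel)
  finally show ?thesis .
qed

lemma space_eq_sphere: "sets M = sets sphere_borel \<Longrightarrow> space M = sphere 0 1"
  using sets_eq_imp_space_eq space_sphere_borel by metis

lemma borel_measurable_continuous_on_sphere: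
  assumes "sets M = sets sphere_borel" "continuous_on (sphere 0 1) f"
  shows "f \<in> borel_measurable M"
proof -
  have "f \<in> borel_measurable sphere_borel"
    unfolding sphere_borel_def by (rule borel_measurable_continuous_on_restrict[OF assms(2)])
  then show ?thesis using measurable_cong_sets[OF assms(1) refl] by blast
qed

lemma continuous_on_sphere_bounded:
  fixes f :: "'a::euclidean_space \<Rightarrow> real"
  assumes "continuous_on (sphere 0 1) f"
  obtains B where "0 \<le> B" "\<And>x. x \<in> sphere 0 1 \<Longrightarrow> \<bar>f x\<bar> \<le> B"
proof -
  obtain b where "\<forall>y\<in>f ` sphere 0 1. norm y \<le> b"
    using compact_imp_bounded[OF compact_continuous_image[OF assms compact_sphere]]
    unfolding bounded_iff by blast
  then show ?thesis using that[of "max b 0"] by force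
qed

lemma integrable_continuous_on_sphere:
  fixes f :: "'a::euclidean_space \<Rightarrow> real"
  assumes "sets M = sets sphere_borel" "finite_measure M" "continuous_on (sphere 0 1) f"
  shows "integrable M f"
proof -
  obtain b where "\<And>x. x \<in> sphere 0 1 \<Longrightarrow> \<bar>f x\<bar> \<le> b"
    using continuous_on_sphere_bounded[OF assms(3)] by blast
  then have "AE v in M. norm (f v) \<le> b" using space_eq_sphere[OF assms(1)] by (intro AE_I2) auto
  then show ?thesis
    using finite_measure.integrable_const_bound[OF assms(2) _ borel_measurable_continuous_on_sphere[OF assms(1,3)]]
    by blast
qed

lemma emeasure_completion_eq_of_null_diff:
  assumes N: "N \<in> null_sets M" and B: "B \<in> sets M" and AB: "A - N = B - N"
  shows "emeasure (completion M) A = emeasure M B"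
proof -
  have N': "N \<in> null_sets (completion M)" using null_sets_completionI[OF N] .
  have "A = (B - N) \<union> (A \<inter> N)" using AB by blast
  moreover have "B - N \<in> sets M" using B null_setsD2[OF N] by (rule sets.Diff)
  ultimately have A: "A \<in> sets (completion M)" by (rule sets_completionI[OF _ Int_lower2 N])
  have "emeasure (completion M) A = emeasure (completion M) (A - N)"
    using emeasure_Diff_null_set[OF N' A] by simp
  also have "\<dots> = emeasure (completion M) (B - N)" by (simp only: AB)
  also have "\<dots> = emeasure (completion M) B"
    using emeasure_Diff_null_set[OF N' sets_completionI_sets[OF B]] by simp
  finally show ?thesis using B by simp
qed

context convex_body_balls
begin

lemma singular_dirs_sphere_null:
  assumes "absolutely_continuous spherical_lebesgue M"
  shows "singular_dirs K \<inter> sphere 0 1 \<in> null_sets M"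
proof -
  have "sphere_cone (singular_dirs K \<inter> sphere 0 1) \<in> null_sets lebesgue"
    using null_sets_completion_subset[OF sphere_cone_singular_subset
        null_sets_completionI[OF singular_dirs_null]] .
  then have "emeasure spherical_lebesgue (singular_dirs K \<inter> sphere 0 1) = 0"
    unfolding spherical_lebesgue_def emeasure_measure_of_conv by auto
  moreover have "singular_dirs K \<inter> sphere 0 1 \<in> sets spherical_lebesgue"
    using singular_dirs_borel
    by (simp add: sets_spherical_lebesgue sphere_borel_def sets_restrict_space_iff)
  ultimately show ?thesis using assms unfolding absolutely_continuous_def by auto
qed

lemma face_point_face: "face_point K v \<in> face K v"
  unfolding face_point_def using face_nonempty by (metis ex_in_conv someI_ex)

lemma face_point_mem: "face_point K v \<in> K"
  using face_point_face by (auto simp: face_def)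

lemma face_point_nonzero: assumes "v \<notin> singular_dirs K" shows "face_point K v \<noteq> 0"
proof -
  have "v \<noteq> 0" using assms zero_singular by auto
  then have "0 < supp K v" by (rule supp_pos)
  moreover have "face_point K v \<bullet> v = supp K v" using face_point_face by (simp add: face_def)
  ultimately show ?thesis by auto
qed

text \<open>The graph of \<open>face_point K\<close> over the regular directions is closed in \<open>(- singular_dirs K) \<times> K\<close>
  with \<open>K\<close> compact, which makes the map continuous there.\<close>
lemma continuous_on_face_point: "continuous_on (- singular_dirs K) (face_point K)"
proof -
  let ?R = "- singular_dirs K"
  have graph: "(\<lambda>x. (x, face_point K x)) ` ?R = (?R \<times> K) \<inter> {z. snd z \<bullet> fst z = supp K (fst z)}"
  proof (intro equalityI subsetI)
    fix z assume "z \<in> (\<lambda>x. (x, face_point K x)) ` ?R"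
    then show "z \<in> (?R \<times> K) \<inter> {z. snd z \<bullet> fst z = supp K (fst z)}"
      using face_point_face by (auto simp: face_def)
  next
    fix z assume z: "z \<in> (?R \<times> K) \<inter> {z. snd z \<bullet> fst z = supp K (fst z)}"
    then have "snd z = face_point K (fst z)"
      using face_singleton[OF _ _ face_point_face] by (auto simp: face_def)
    then show "z \<in> (\<lambda>x. (x, face_point K x)) ` ?R"
      using z by (auto intro!: image_eqI[of _ _ "fst z"] prod_eqI)
  qed
  have "continuous_on UNIV (\<lambda>z::('a \<times> 'a). supp K (fst z))"
    by (rule continuous_on_compose2[OF continuous_on_supp_K continuous_on_fst]) auto
  then have "closed {z::('a \<times> 'a). snd z \<bullet> fst z = supp K (fst z)}"
    by (intro closed_Collect_eq continuous_intros)
  then have "closedin (top_of_set (?R \<times> K)) ((\<lambda>x. (x, face_point K x)) ` ?R)"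
    unfolding graph by (rule closedin_closed_Int)
  moreover have "face_point K \<in> ?R \<rightarrow> K" using face_point_mem by blast
  ultimately show ?thesis using continuous_closed_graph_eq[OF K_compact] by blast
qed

lemma rev_radial_gauss_unit: "rev_radial_gauss K v \<in> sphere 0 1"
proof -
  have "(SOME b. b \<in> Basis) \<in> (Basis :: 'a set)"
    using nonempty_Basis by (metis ex_in_conv someI_ex)
  then show ?thesis using face_point_nonzero[of v] by (auto simp: rev_radial_gauss_def)
qed

lemma rev_radial_gauss_measurable: "rev_radial_gauss K \<in> sphere_borel \<rightarrow>\<^sub>M sphere_borel"
proof -
  have "rev_radial_gauss K \<in> borel_measurable borel"
    unfolding rev_radial_gauss_def Compl_iff[symmetric]
    using face_point_nonzero singular_dirs_borel
    by (intro borel_measurable_continuous_on_if continuous_intros continuous_on_face_point) auto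
  then show ?thesis
    unfolding sphere_borel_def using rev_radial_gauss_unit
    by (intro measurable_restrict_space3) auto
qed

lemma radial_point_inner_le_supp: "u \<in> sphere 0 1 \<Longrightarrow> (radial K u *\<^sub>R u) \<bullet> v \<le> supp K v"
  using inner_le_supp_K[OF radial_point_mem] by blast

lemma radial_point_supporting_iff:
  assumes v: "v \<notin> singular_dirs K" and u: "u \<in> sphere 0 1"
  shows "(radial K u *\<^sub>R u) \<bullet> v = supp K v \<longleftrightarrow> u = rev_radial_gauss K v"
proof
  assume "(radial K u *\<^sub>R u) \<bullet> v = supp K v"
  then have "radial K u *\<^sub>R u \<in> face K v" using radial_point_mem[OF u] by (auto simp: face_def)
  then have y: "face_point K v = radial K u *\<^sub>R u" using face_singleton[OF v face_point_face] by blast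
  then have "norm (face_point K v) = radial K u" using radial_pos[OF u] u by simp
  then show "u = rev_radial_gauss K v"
    using v y radial_pos[OF u] by (simp add: rev_radial_gauss_def)
next
  assume uv: "u = rev_radial_gauss K v"
  let ?y = "face_point K v"
  have "?y \<noteq> 0" using face_point_nonzero[OF v] .
  then have u_eq: "u = ?y /\<^sub>R norm ?y" and ny: "0 < norm ?y" using uv v by (auto simp: rev_radial_gauss_def)
  have le: "norm ?y \<le> radial K u" using norm_le_radial[OF face_point_mem \<open>?y \<noteq> 0\<close>] u_eq by simp
  have "v \<noteq> 0" using v zero_singular by auto
  have uv_eq: "u \<bullet> v = supp K v / norm ?y"
    using face_point_face u_eq by (simp add: face_def divide_inverse_commute)
  then have "0 < u \<bullet> v" using supp_pos[OF \<open>v \<noteq> 0\<close>] ny by simp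
  then have "norm ?y * (u \<bullet> v) \<le> (radial K u *\<^sub>R u) \<bullet> v" using le by (simp add: mult_right_mono)
  also have "norm ?y * (u \<bullet> v) = supp K v" using uv_eq ny by simp
  finally show "(radial K u *\<^sub>R u) \<bullet> v = supp K v"
    using radial_point_inner_le_supp[OF u, of v] by linarith
qed

lemma supp_eq_radial_rev_radial_gauss:
  assumes "v \<notin> singular_dirs K"
  shows "supp K v = radial K (rev_radial_gauss K v) * (rev_radial_gauss K v \<bullet> v)"
  using radial_point_supporting_iff[OF assms rev_radial_gauss_unit[of v]] by simp

lemma inner_rev_radial_gauss_pos:
  assumes "v \<in> sphere 0 1" "v \<notin> singular_dirs K"
  shows "0 < rev_radial_gauss K v \<bullet> v"
  using supp_pos_sphere[OF assms(1)] supp_eq_radial_rev_radial_gauss[OF assms(2)]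
    radial_pos[OF rev_radial_gauss_unit] by (metis zero_less_mult_pos)

lemma radial_gauss_image_regular:
  assumes "\<omega> \<subseteq> sphere 0 1"
  shows "radial_gauss_image K \<omega> - singular_dirs K \<inter> sphere 0 1
       = (rev_radial_gauss K -` \<omega> \<inter> sphere 0 1) - singular_dirs K \<inter> sphere 0 1"
proof (intro equalityI subsetI)
  fix v assume "v \<in> radial_gauss_image K \<omega> - singular_dirs K \<inter> sphere 0 1"
  then show "v \<in> (rev_radial_gauss K -` \<omega> \<inter> sphere 0 1) - singular_dirs K \<inter> sphere 0 1"
    using radial_point_supporting_iff assms unfolding radial_gauss_image_def by blast
next
  fix v assume v: "v \<in> (rev_radial_gauss K -` \<omega> \<inter> sphere 0 1) - singular_dirs K \<inter> sphere 0 1"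
  then have "(radial K (rev_radial_gauss K v) *\<^sub>R rev_radial_gauss K v) \<bullet> v = supp K v"
    using radial_point_supporting_iff[OF _ rev_radial_gauss_unit] by blast
  then show "v \<in> radial_gauss_image K \<omega> - singular_dirs K \<inter> sphere 0 1"
    using v unfolding radial_gauss_image_def by blast
qed

theorem gauss_image_measure_eq_distr:
  assumes M: "sets M = sets sphere_borel" and ac: "absolutely_continuous spherical_lebesgue M"
  shows "gauss_image_measure M K = distr M sphere_borel (rev_radial_gauss K)"
proof -
  let ?G = "distr M sphere_borel (rev_radial_gauss K)"
  let ?N = "singular_dirs K \<inter> sphere 0 1"
  have f: "rev_radial_gauss K \<in> M \<rightarrow>\<^sub>M sphere_borel"
    using rev_radial_gauss_measurable measurable_cong_sets[OF M refl] by blast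
  have S: "space M = sphere 0 1" using space_eq_sphere[OF M] .
  have "emeasure (completion M) (radial_gauss_image K \<omega>) = emeasure ?G \<omega>" if \<omega>: "\<omega> \<in> sets M" for \<omega>
  proof -
    have "\<omega> \<subseteq> sphere 0 1" using sets.sets_into_space[OF \<omega>] S by simp
    then have eq: "radial_gauss_image K \<omega> - ?N = (rev_radial_gauss K -` \<omega> \<inter> space M) - ?N"
      using radial_gauss_image_regular S by simp
    have B: "rev_radial_gauss K -` \<omega> \<inter> space M \<in> sets M"
      using measurable_sets[OF f, of \<omega>] \<omega> M by simp
    have "emeasure (completion M) (radial_gauss_image K \<omega>) = emeasure M (rev_radial_gauss K -` \<omega> \<inter> space M)"
      by (rule emeasure_completion_eq_of_null_diff[OF singular_dirs_sphere_null[OF ac] B eq])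
    also have "\<dots> = emeasure ?G \<omega>" using emeasure_distr[OF f, of \<omega>] \<omega> M by simp
    finally show ?thesis .
  qed
  then have "gauss_image_measure M K = measure_of (space M) (sets M) (emeasure ?G)"
    unfolding gauss_image_measure_def
    by (intro measure_of_eq[OF sets.space_closed]) (simp add: sets.sigma_sets_eq)
  also have "\<dots> = ?G"
    using M S measure_of_of_measure[of ?G] by (simp add: space_sphere_borel)
  finally show ?thesis .
qed

end

section \<open>Differentiating a supremum and an integral\<close>

lemma mult_le_abs_mult_bound:
  fixes t a B :: real
  assumes "\<bar>a\<bar> \<le> B"
  shows "t * a \<le> \<bar>t\<bar> * B" and "- (\<bar>t\<bar> * B) \<le> t * a"
proof -
  have "\<bar>t * a\<bar> \<le> \<bar>t\<bar> * B" using assms by (simp add: abs_mult mult_left_mono)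
  then show "t * a \<le> \<bar>t\<bar> * B" "- (\<bar>t\<bar> * B) \<le> t * a" by linarith+
qed

locale sup_envelope =
  fixes X :: "'x set" and F :: "real \<Rightarrow> 'x \<Rightarrow> real" and m :: "real \<Rightarrow> real"
    and G :: "'x \<Rightarrow> real" and x0 :: 'x and \<delta> B C :: real
  assumes delta_pos: "0 < \<delta>" and C_nonneg: "0 \<le> C" and x0: "x0 \<in> X"
    and G_bound: "\<And>x. x \<in> X \<Longrightarrow> \<bar>G x\<bar> \<le> B"
    and le_sup: "\<And>t x. \<bar>t\<bar> < \<delta> \<Longrightarrow> x \<in> X \<Longrightarrow> F t x \<le> m t"
    and sup_le: "\<And>t U. \<bar>t\<bar> < \<delta> \<Longrightarrow> (\<And>x. x \<in> X \<Longrightarrow> F t x \<le> U) \<Longrightarrow> m t \<le> U"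
    and expansion: "\<And>t x. \<bar>t\<bar> < \<delta> \<Longrightarrow> x \<in> X \<Longrightarrow> \<bar>F t x - F 0 x - t * G x\<bar> \<le> C * t\<^sup>2"
    and attained: "F 0 x0 = m 0"
begin

lemma lower_bound: "\<bar>t\<bar> < \<delta> \<Longrightarrow> m 0 + t * G x0 - C * t\<^sup>2 \<le> m t"
  using le_sup[of t x0] expansion[of t x0] attained x0 by (simp add: abs_le_iff)

lemma upper_bound:
  assumes t: "\<bar>t\<bar> < \<delta>" and below: "\<And>x. x \<in> X \<Longrightarrow> F 0 x + t * G x \<le> m 0 + e"
  shows "m t \<le> m 0 + e + C * t\<^sup>2"
proof (rule sup_le[OF t])
  fix x assume x: "x \<in> X"
  then show "F t x \<le> m 0 + e + C * t\<^sup>2"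
    using expansion[OF t x] below[OF x] by (simp add: abs_le_iff)
qed

lemma F_zero_le: "x \<in> X \<Longrightarrow> F 0 x \<le> m 0"
  using le_sup delta_pos by simp

lemma diff_bound:
  assumes t: "\<bar>t\<bar> < \<delta>"
  shows "\<bar>m t - m 0\<bar> \<le> \<bar>t\<bar> * B + C * t\<^sup>2"
proof -
  have "F 0 x + t * G x \<le> m 0 + \<bar>t\<bar> * B" if "x \<in> X" for x
    using F_zero_le[OF that] mult_le_abs_mult_bound(1)[OF G_bound[OF that], of t] by linarith
  from upper_bound[OF t this] lower_bound[OF t] mult_le_abs_mult_bound[OF G_bound[OF x0], of t]
  show ?thesis by (simp add: abs_le_iff)
qed

lemma diff_near_linear:
  assumes t: "\<bar>t\<bar> < \<delta>" and \<eta>: "2 * (\<bar>t\<bar> * B) \<le> \<eta>" and "0 \<le> \<epsilon>"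
    and near: "\<And>x. x \<in> X \<Longrightarrow> m 0 - \<eta> \<le> F 0 x \<Longrightarrow> \<bar>G x - G x0\<bar> \<le> \<epsilon>"
  shows "\<bar>m t - m 0 - t * G x0\<bar> \<le> \<bar>t\<bar> * \<epsilon> + C * t\<^sup>2"
proof -
  have t\<epsilon>: "0 \<le> \<bar>t\<bar> * \<epsilon>" using \<open>0 \<le> \<epsilon>\<close> by simp
  have "F 0 x + t * G x \<le> m 0 + (t * G x0 + \<bar>t\<bar> * \<epsilon>)" if x: "x \<in> X" for x
  proof (cases "m 0 - \<eta> \<le> F 0 x")
    case True
    then show ?thesis using F_zero_le[OF x] mult_le_abs_mult_bound(1)[OF near[OF x True], of t]
      by (simp add: algebra_simps)
  next
    case False
    then show ?thesis
      using t\<epsilon> \<eta> mult_le_abs_mult_bound[OF G_bound[OF x], of t] mult_le_abs_mult_bound[OF G_bound[OF x0], of t]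
      by linarith
  qed
  from upper_bound[OF t this] lower_bound[OF t] show ?thesis
    using t\<epsilon> unfolding abs_le_iff by linarith
qed

lemma diff_quotient_tendsto:
  assumes near: "\<And>\<epsilon>. \<epsilon> > 0 \<Longrightarrow> \<exists>\<eta>>0. \<forall>x\<in>X. m 0 - \<eta> \<le> F 0 x \<longrightarrow> \<bar>G x - G x0\<bar> \<le> \<epsilon>"
  shows "((\<lambda>t. (m t - m 0) / t) \<longlongrightarrow> G x0) (at 0)"
  unfolding LIM_eq
proof (intro allI impI)
  fix r :: real assume r: "r > 0"
  obtain \<eta> where \<eta>: "\<eta> > 0" "\<And>x. x \<in> X \<Longrightarrow> m 0 - \<eta> \<le> F 0 x \<Longrightarrow> \<bar>G x - G x0\<bar> \<le> r / 2"
    using near[of "r/2"] r by auto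
  have B: "0 \<le> B" using G_bound[OF x0] by linarith
  define s where "s = min \<delta> (min (\<eta> / (2 * B + 1)) (r / (2 * C + 1)))"
  have "s > 0" using delta_pos \<eta> B C_nonneg r by (simp add: s_def)
  moreover have "\<bar>(m t - m 0) / t - G x0\<bar> < r" if t0: "t \<noteq> 0" and ts: "\<bar>t\<bar> < s" for t
  proof -
    have "\<bar>t\<bar> * (2 * B + 1) < \<eta>" using ts B by (simp add: s_def pos_less_divide_eq)
    then have "2 * (\<bar>t\<bar> * B) \<le> \<eta>" by (simp add: algebra_simps)
    then have "\<bar>m t - m 0 - t * G x0\<bar> \<le> \<bar>t\<bar> * (r/2) + C * t\<^sup>2"
      using ts r \<eta>(2) by (intro diff_near_linear) (auto simp: s_def)
    then have "\<bar>m t - m 0 - t * G x0\<bar> / \<bar>t\<bar> \<le> r/2 + C * \<bar>t\<bar>"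
      using t0 by (simp add: divide_le_eq power2_eq_square algebra_simps abs_mult_self_eq)
    moreover have "(m t - m 0) / t - G x0 = (m t - m 0 - t * G x0) / t"
      using t0 by (simp add: field_simps)
    moreover have "\<bar>t\<bar> * (2 * C + 1) < r"
      using ts C_nonneg by (simp add: s_def pos_less_divide_eq)
    ultimately show ?thesis using C_nonneg by (simp add: abs_divide algebra_simps)
  qed
  ultimately show "\<exists>s>0. \<forall>t. t \<noteq> 0 \<and> norm (t - 0) < s \<longrightarrow> norm ((m t - m 0) / t - G x0) < r"
    by auto
qed

end

lemma unique_maximizer_near:
  fixes \<phi> g :: "'a::metric_space \<Rightarrow> real"
  assumes S: "compact S" and \<phi>: "continuous_on S \<phi>" and g: "continuous_on S g" and "x0 \<in> S"
    and unique: "\<And>x. x \<in> S \<Longrightarrow> \<phi> x0 \<le> \<phi> x \<Longrightarrow> x = x0" and "\<epsilon> > 0"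
  obtains c where "c < \<phi> x0" "\<And>x. x \<in> S \<Longrightarrow> c \<le> \<phi> x \<Longrightarrow> \<bar>g x - g x0\<bar> \<le> \<epsilon>"
proof -
  define Z where "Z = S \<inter> (\<lambda>x. \<bar>g x - g x0\<bar>) -` {\<epsilon>..}"
  have "closedin (top_of_set S) Z" unfolding Z_def
    by (intro continuous_closedin_preimage continuous_intros g)
  then have Z: "compact Z" using closedin_compact[OF S] by blast
  show ?thesis
  proof (cases "Z = {}")
    case True
    then show ?thesis using that[of "\<phi> x0 - 1"] by (fastforce simp: Z_def)
  next
    case False
    have "continuous_on Z \<phi>" using \<phi> by (rule continuous_on_subset) (auto simp: Z_def)
    then obtain z where z: "z \<in> Z" "\<And>x. x \<in> Z \<Longrightarrow> \<phi> x \<le> \<phi> z"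
      using continuous_attains_sup[OF Z False] by blast
    then have "z \<noteq> x0" using \<open>\<epsilon> > 0\<close> by (auto simp: Z_def)
    then have "\<phi> z < \<phi> x0" using unique z(1) by (force simp: Z_def)
    show ?thesis
    proof (rule that[of "(\<phi> z + \<phi> x0) / 2"])
      show "(\<phi> z + \<phi> x0) / 2 < \<phi> x0" using \<open>\<phi> z < \<phi> x0\<close> by simp
      fix x assume "x \<in> S" "(\<phi> z + \<phi> x0) / 2 \<le> \<phi> x"
      then show "\<bar>g x - g x0\<bar> \<le> \<epsilon>"
        using z(2)[of x] \<open>\<phi> z < \<phi> x0\<close> by (force simp: Z_def)
    qed
  qed
qed

lemma tendsto_integral_dominated_at:
  fixes q :: "real \<Rightarrow> 'b \<Rightarrow> real"
  assumes D: "D \<in> borel_measurable M" and w: "integrable M w"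
    and measurable: "\<forall>\<^sub>F t in at a. q t \<in> borel_measurable M"
    and lim: "AE v in M. ((\<lambda>t. q t v) \<longlongrightarrow> D v) (at a)"
    and bound: "\<forall>\<^sub>F t in at a. AE v in M. norm (q t v) \<le> w v"
  shows "((\<lambda>t. \<integral>v. q t v \<partial>M) \<longlongrightarrow> (\<integral>v. D v \<partial>M)) (at a)"
  unfolding tendsto_at_iff_sequentially comp_def
proof (intro allI impI)
  fix X :: "nat \<Rightarrow> real" assume "\<forall>i. X i \<in> UNIV - {a}" "X \<longlonglongrightarrow> a"
  then have X: "filterlim X (at a) sequentially" by (intro filterlim_atI) auto
  from filterlim_iff[THEN iffD1, OF X, rule_format, OF eventually_conj[OF measurable bound]]
  obtain N where N: "\<And>n. N \<le> n \<Longrightarrow> q (X n) \<in> borel_measurable M \<and> (AE v in M. norm (q (X n) v) \<le> w v)"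
    by (auto simp: eventually_sequentially)
  show "(\<lambda>n. \<integral>v. q (X n) v \<partial>M) \<longlonglongrightarrow> (\<integral>v. D v \<partial>M)"
  proof (rule LIMSEQ_offset[of _ N], rule integral_dominated_convergence[OF D _ w])
    show "q (X (n + N)) \<in> borel_measurable M" "AE v in M. norm (q (X (n + N)) v) \<le> w v" for n
      using N[of "n + N"] by auto
    show "AE v in M. (\<lambda>n. q (X (n + N)) v) \<longlonglongrightarrow> D v"
      using lim by eventually_elim (rule LIMSEQ_ignore_initial_segment[OF filterlim_compose[OF _ X]])
  qed
qed

lemma integral_has_real_derivative_dominated:
  fixes f :: "real \<Rightarrow> 'b \<Rightarrow> real"
  assumes M: "finite_measure M" and \<delta>: "0 < \<delta>"
    and integrable: "\<And>t. \<bar>t\<bar> < \<delta> \<Longrightarrow> integrable M (f t)"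
    and D: "D \<in> borel_measurable M"
    and lim: "AE v in M. ((\<lambda>t. (f t v - f 0 v) / t) \<longlongrightarrow> D v) (at 0)"
    and lipschitz: "AE v in M. \<forall>t. \<bar>t\<bar> < \<delta> \<longrightarrow> \<bar>f t v - f 0 v\<bar> \<le> L * \<bar>t\<bar>"
  shows "((\<lambda>t. \<integral>v. f t v \<partial>M) has_real_derivative (\<integral>v. D v \<partial>M)) (at 0)"
proof -
  have near: "\<forall>\<^sub>F t in at 0. \<bar>t\<bar> < \<delta> \<and> t \<noteq> 0"
    using eventually_at[of _ "0::real"] \<delta> by (auto simp: dist_real_def)
  have "((\<lambda>t. \<integral>v. (f t v - f 0 v) / t \<partial>M) \<longlongrightarrow> (\<integral>v. D v \<partial>M)) (at 0)"
  proof (rule tendsto_integral_dominated_at[OF D finite_measure.integrable_const[OF M, of L] _ lim])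
    show "\<forall>\<^sub>F t in at 0. (\<lambda>v. (f t v - f 0 v) / t) \<in> borel_measurable M"
      using near by eventually_elim (use integrable \<delta> in auto)
    show "\<forall>\<^sub>F t in at 0. AE v in M. norm ((f t v - f 0 v) / t) \<le> L"
      using near
    proof eventually_elim
      case (elim t)
      show ?case using lipschitz by eventually_elim (use elim in \<open>auto simp: abs_divide divide_le_eq\<close>)
    qed
  qed
  moreover have "\<forall>\<^sub>F t in at 0. (\<integral>v. (f t v - f 0 v) / t \<partial>M)
      = ((\<integral>v. f t v \<partial>M) - (\<integral>v. f 0 v \<partial>M)) / (t - 0)"
    using near by eventually_elim (use integrable \<delta> in simp)
  ultimately show ?thesis
    unfolding has_field_derivative_iff by (rule Lim_transform_eventually)
qed

section \<open>Entropy of polars of perturbed Wulff shapes\<close>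

text \<open>The expansion forces \<open>h 0 = 1 / \<rho>\<^sub>K\<close>, the support function of \<open>K\<^sup>*\<close> on the sphere, so the
  Wulff shapes \<open>[h t]\<close> perturb \<open>K\<^sup>*\<close>.\<close>
locale entropy_variation = convex_body_balls K r R for K :: "'a::euclidean_space set" and r R +
  fixes h :: "real \<Rightarrow> 'a \<Rightarrow> real" and g :: "'a \<Rightarrow> real" and \<delta> C :: real
  assumes delta_pos: "0 < \<delta>" and C_nonneg: "0 \<le> C"
    and h_pos: "\<And>t x. \<bar>t\<bar> < \<delta> \<Longrightarrow> x \<in> sphere 0 1 \<Longrightarrow> 0 < h t x"
    and ln_h_expansion: "\<And>t x. \<bar>t\<bar> < \<delta> \<Longrightarrow> x \<in> sphere 0 1 \<Longrightarrow>
       \<bar>ln (h t x) + ln (radial K x) - t * g x\<bar> \<le> C * t\<^sup>2"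
    and continuous_g: "continuous_on (sphere 0 1) g"
begin

definition log_supp :: "real \<Rightarrow> 'a \<Rightarrow> real" where
  "log_supp t v = ln (supp (polar (wulff (sphere 0 1) (h t))) v)"

lemma ln_h_zero: "x \<in> sphere 0 1 \<Longrightarrow> ln (h 0 x) = - ln (radial K x)"
  using ln_h_expansion[of 0 x] delta_pos by simp

lemma h_zero: assumes "x \<in> sphere 0 1" shows "h 0 x = 1 / radial K x"
proof -
  have "h 0 x = exp (- ln (radial K x))"
    using ln_h_zero[OF assms] h_pos[OF _ assms] delta_pos by (metis abs_zero exp_ln)
  then show ?thesis using radial_pos[OF assms] by (simp add: exp_minus inverse_eq_divide)
qed

lemma h_bounded_below:
  obtains c where "\<And>t. \<bar>t\<bar> < \<delta> \<Longrightarrow> wulff_bounded_below (h t) c"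
proof -
  obtain B where B: "0 \<le> B" "\<And>x. x \<in> sphere 0 1 \<Longrightarrow> \<bar>g x\<bar> \<le> B"
    using continuous_on_sphere_bounded[OF continuous_g] by blast
  define c where "c = exp (- (ln R + \<delta> * B + C * \<delta>\<^sup>2))"
  have "c \<le> h t x" if t: "\<bar>t\<bar> < \<delta>" and x: "x \<in> sphere 0 1" for t x
  proof -
    have "ln (radial K x) \<le> ln R" using radial_le_outer_radius[OF x] radial_pos[OF x] by simp
    moreover have "\<bar>t\<bar> * B \<le> \<delta> * B" using t B(1) by (simp add: mult_right_mono)
    moreover have "C * t\<^sup>2 \<le> C * \<delta>\<^sup>2"
      using t C_nonneg delta_pos abs_le_square_iff[of t \<delta>] by (intro mult_left_mono) auto
    ultimately have "- (ln R + \<delta> * B + C * \<delta>\<^sup>2) \<le> ln (h t x)"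
      using ln_h_expansion[OF t x] mult_le_abs_mult_bound(2)[OF B(2)[OF x], of t] by linarith
    then show ?thesis using h_pos[OF t x] by (simp add: c_def ln_ge_iff)
  qed
  then show ?thesis using that[of c] by (simp add: wulff_bounded_below_def c_def)
qed

lemma supp_polar_wulff_h_zero:
  assumes v: "v \<notin> singular_dirs K"
  shows "supp (polar (wulff (sphere 0 1) (h 0))) v = supp K v"
proof -
  obtain c where "\<And>t. \<bar>t\<bar> < \<delta> \<Longrightarrow> wulff_bounded_below (h t) c" using h_bounded_below by blast
  then have c: "wulff_bounded_below (h 0) c" using delta_pos by simp
  have eq: "(x \<bullet> v) / h 0 x = (radial K x *\<^sub>R x) \<bullet> v" if "x \<in> sphere 0 1" for x
    using h_zero[OF that] by simp
  show ?thesis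
  proof (rule order.antisym)
    show "supp (polar (wulff (sphere 0 1) (h 0))) v \<le> supp K v"
      using eq radial_point_inner_le_supp by (intro wulff_bounded_below.supp_polar_wulff_le[OF c]) simp
    have "supp K v = (rev_radial_gauss K v \<bullet> v) / h 0 (rev_radial_gauss K v)"
      using eq[OF rev_radial_gauss_unit] supp_eq_radial_rev_radial_gauss[OF v] by simp
    also have "\<dots> \<le> supp (polar (wulff (sphere 0 1) (h 0))) v"
      by (rule wulff_bounded_below.supp_polar_wulff_ge[OF c rev_radial_gauss_unit])
    finally show "supp K v \<le> supp (polar (wulff (sphere 0 1) (h 0))) v" .
  qed
qed

lemma le_log_supp:
  assumes t: "\<bar>t\<bar> < \<delta>" and x: "x \<in> sphere 0 1" "0 < x \<bullet> v"
  shows "ln (x \<bullet> v) - ln (h t x) \<le> log_supp t v"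
proof -
  obtain c where c: "wulff_bounded_below (h t) c" using h_bounded_below t by blast
  have pos: "0 < (x \<bullet> v) / h t x" using x h_pos[OF t x(1)] by simp
  have "(x \<bullet> v) / h t x \<le> supp (polar (wulff (sphere 0 1) (h t))) v"
    using wulff_bounded_below.supp_polar_wulff_ge[OF c x(1)] .
  then have "ln ((x \<bullet> v) / h t x) \<le> log_supp t v"
    unfolding log_supp_def using pos by (rule ln_mono)
  then show ?thesis using x h_pos[OF t x(1)] by (simp add: ln_div)
qed

lemma log_supp_le:
  assumes t: "\<bar>t\<bar> < \<delta>" and v: "v \<in> sphere 0 1"
    and U: "\<And>x. x \<in> sphere 0 1 \<Longrightarrow> 0 < x \<bullet> v \<Longrightarrow> ln (x \<bullet> v) - ln (h t x) \<le> U"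
  shows "log_supp t v \<le> U"
proof -
  obtain c where c: "wulff_bounded_below (h t) c" using h_bounded_below t by blast
  have "(x \<bullet> v) / h t x \<le> exp U" if x: "x \<in> sphere 0 1" for x
  proof (cases "0 < x \<bullet> v")
    case True
    then have "ln ((x \<bullet> v) / h t x) \<le> U" using U[OF x] h_pos[OF t x] by (simp add: ln_div)
    then have "exp (ln ((x \<bullet> v) / h t x)) \<le> exp U" by simp
    then show ?thesis using True h_pos[OF t x] by simp
  next
    case False
    then have "(x \<bullet> v) / h t x \<le> 0" using h_pos[OF t x] by (simp add: divide_nonpos_pos)
    then show ?thesis using exp_gt_zero[of U] by linarith
  qed
  then have "supp (polar (wulff (sphere 0 1) (h t))) v \<le> exp U"
    by (rule wulff_bounded_below.supp_polar_wulff_le[OF c])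
  then have "ln (supp (polar (wulff (sphere 0 1) (h t))) v) \<le> ln (exp U)"
    using wulff_bounded_below.supp_polar_wulff_pos[OF c v] by (rule ln_mono)
  then show ?thesis by (simp add: log_supp_def)
qed

lemma log_supp_zero: "v \<notin> singular_dirs K \<Longrightarrow> log_supp 0 v = ln (supp K v)"
  using supp_polar_wulff_h_zero by (simp add: log_supp_def)

lemma ln_inner_div_h_zero:
  assumes "x \<in> sphere 0 1" "0 < x \<bullet> v"
  shows "ln (x \<bullet> v) - ln (h 0 x) = ln (radial K x * (x \<bullet> v))"
  using ln_h_zero[OF assms(1)] radial_pos[OF assms(1)] assms(2) by (simp add: ln_mult)

text \<open>The logarithmic form of \<open>h[h]*(v) = max\<^sub>x (x \<bullet> v) / h x\<close>.\<close>
lemma sup_envelope_log_supp: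
  assumes v: "v \<in> sphere 0 1" "v \<notin> singular_dirs K" and B: "\<And>x. x \<in> sphere 0 1 \<Longrightarrow> \<bar>g x\<bar> \<le> B"
  shows "sup_envelope {x \<in> sphere 0 1. 0 < x \<bullet> v} (\<lambda>t x. ln (x \<bullet> v) - ln (h t x)) (\<lambda>t. log_supp t v)
           (\<lambda>x. - g x) (rev_radial_gauss K v) \<delta> B C"
proof unfold_locales
  let ?x0 = "rev_radial_gauss K v"
  show x0: "?x0 \<in> {x \<in> sphere 0 1. 0 < x \<bullet> v}"
    using rev_radial_gauss_unit inner_rev_radial_gauss_pos[OF v] by simp
  then show "ln (?x0 \<bullet> v) - ln (h 0 ?x0) = log_supp 0 v"
    using log_supp_zero[OF v(2)] ln_inner_div_h_zero supp_eq_radial_rev_radial_gauss[OF v(2)] by simp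
  fix t assume t: "\<bar>t\<bar> < \<delta>"
  show "ln (x \<bullet> v) - ln (h t x) \<le> log_supp t v" if "x \<in> {x \<in> sphere 0 1. 0 < x \<bullet> v}" for x
    using le_log_supp[OF t] that by simp
  show "log_supp t v \<le> U"
    if "\<And>x. x \<in> {x \<in> sphere 0 1. 0 < x \<bullet> v} \<Longrightarrow> ln (x \<bullet> v) - ln (h t x) \<le> U" for U
    using log_supp_le[OF t v(1)] that by simp
  show "\<bar>ln (x \<bullet> v) - ln (h t x) - (ln (x \<bullet> v) - ln (h 0 x)) - t * - g x\<bar> \<le> C * t\<^sup>2"
    if "x \<in> {x \<in> sphere 0 1. 0 < x \<bullet> v}" for x
    using that ln_h_expansion[OF t, of x] ln_h_zero[of x] by (simp add: abs_minus_commute algebra_simps)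
qed (use delta_pos C_nonneg B in auto)

text \<open>\<open>\<alpha>\<^sup>*\<^sub>K(v)\<close> is the unique maximiser of the continuous function \<open>\<rho>\<^sub>K(x) (x \<bullet> v)\<close> on the sphere.\<close>
lemma near_maximizers_g_close:
  assumes v: "v \<in> sphere 0 1" "v \<notin> singular_dirs K" and "\<epsilon> > 0"
  shows "\<exists>\<eta>>0. \<forall>x\<in>{x \<in> sphere 0 1. 0 < x \<bullet> v}.
           log_supp 0 v - \<eta> \<le> ln (x \<bullet> v) - ln (h 0 x) \<longrightarrow> \<bar>g x - g (rev_radial_gauss K v)\<bar> \<le> \<epsilon>"
proof -
  let ?x0 = "rev_radial_gauss K v"
  let ?\<phi> = "\<lambda>x. radial K x * (x \<bullet> v)"
  have \<phi>x0: "?\<phi> ?x0 = supp K v" using supp_eq_radial_rev_radial_gauss[OF v(2)] by simp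
  have "continuous_on (sphere 0 1) ?\<phi>" by (intro continuous_intros continuous_on_radial)
  moreover have "x = ?x0" if x: "x \<in> sphere 0 1" and "?\<phi> ?x0 \<le> ?\<phi> x" for x
  proof -
    have "supp K v \<le> ?\<phi> x" using that(2) \<phi>x0 by simp
    moreover have "?\<phi> x \<le> supp K v" using radial_point_inner_le_supp[OF x, of v] by simp
    ultimately show ?thesis using radial_point_supporting_iff[OF v(2) x] by simp
  qed
  ultimately obtain c where c: "c < ?\<phi> ?x0"
    "\<And>x. x \<in> sphere 0 1 \<Longrightarrow> c \<le> ?\<phi> x \<Longrightarrow> \<bar>g x - g ?x0\<bar> \<le> \<epsilon>"
    using unique_maximizer_near[OF compact_sphere _ continuous_g rev_radial_gauss_unit[of v] _ \<open>\<epsilon> > 0\<close>]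
    by blast
  define c' where "c' = max c (supp K v / 2)"
  have c': "0 < c'" "c' < supp K v" using c(1) \<phi>x0 supp_pos_sphere[OF v(1)] by (auto simp: c'_def)
  show ?thesis
  proof (intro exI[of _ "ln (supp K v) - ln c'"] conjI ballI impI)
    show "0 < ln (supp K v) - ln c'" using c' by simp
    fix x assume x: "x \<in> {x \<in> sphere 0 1. 0 < x \<bullet> v}"
      and "log_supp 0 v - (ln (supp K v) - ln c') \<le> ln (x \<bullet> v) - ln (h 0 x)"
    then have "ln c' \<le> ln (?\<phi> x)" using log_supp_zero[OF v(2)] ln_inner_div_h_zero by simp
    moreover have "0 < ?\<phi> x" using x radial_pos by simp
    ultimately have "c \<le> ?\<phi> x" using c' by (simp add: c'_def)
    then show "\<bar>g x - g ?x0\<bar> \<le> \<epsilon>" using c(2) x by simp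
  qed
qed

lemma log_supp_diff_quotient_tendsto:
  assumes v: "v \<in> sphere 0 1" "v \<notin> singular_dirs K"
  shows "((\<lambda>t. (log_supp t v - log_supp 0 v) / t) \<longlongrightarrow> - g (rev_radial_gauss K v)) (at 0)"
proof -
  obtain B where B: "\<And>x. x \<in> sphere 0 1 \<Longrightarrow> \<bar>g x\<bar> \<le> B"
    using continuous_on_sphere_bounded[OF continuous_g] by blast
  interpret sup_envelope "{x \<in> sphere 0 1. 0 < x \<bullet> v}" "\<lambda>t x. ln (x \<bullet> v) - ln (h t x)"
    "\<lambda>t. log_supp t v" "\<lambda>x. - g x" "rev_radial_gauss K v" \<delta> B C
    using sup_envelope_log_supp[OF v B] .
  show ?thesis
    using near_maximizers_g_close[OF v] by (intro diff_quotient_tendsto) (simp add: abs_minus_commute)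
qed

lemma log_supp_lipschitz:
  obtains L where "\<And>v t. v \<in> sphere 0 1 \<Longrightarrow> v \<notin> singular_dirs K \<Longrightarrow> \<bar>t\<bar> < \<delta> \<Longrightarrow>
    \<bar>log_supp t v - log_supp 0 v\<bar> \<le> L * \<bar>t\<bar>"
proof -
  obtain B where B: "\<And>x. x \<in> sphere 0 1 \<Longrightarrow> \<bar>g x\<bar> \<le> B"
    using continuous_on_sphere_bounded[OF continuous_g] by blast
  have "\<bar>log_supp t v - log_supp 0 v\<bar> \<le> (B + C * \<delta>) * \<bar>t\<bar>"
    if v: "v \<in> sphere 0 1" "v \<notin> singular_dirs K" and t: "\<bar>t\<bar> < \<delta>" for v t
  proof -
    interpret sup_envelope "{x \<in> sphere 0 1. 0 < x \<bullet> v}" "\<lambda>t x. ln (x \<bullet> v) - ln (h t x)"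
      "\<lambda>t. log_supp t v" "\<lambda>x. - g x" "rev_radial_gauss K v" \<delta> B C
      using sup_envelope_log_supp[OF v B] .
    have "C * t\<^sup>2 = C * (\<bar>t\<bar> * \<bar>t\<bar>)" by (simp add: power2_eq_square)
    also have "\<dots> \<le> C * (\<delta> * \<bar>t\<bar>)" using t C_nonneg by (intro mult_left_mono mult_right_mono) auto
    finally have "C * t\<^sup>2 \<le> C * (\<delta> * \<bar>t\<bar>)" .
    then show ?thesis using diff_bound[OF t] by (simp add: algebra_simps)
  qed
  then show ?thesis using that by blast
qed

lemma continuous_on_log_supp:
  assumes "\<bar>t\<bar> < \<delta>" shows "continuous_on (sphere 0 1) (log_supp t)"
proof -
  obtain c where c: "wulff_bounded_below (h t) c" using h_bounded_below assms by blast
  show ?thesis unfolding log_supp_def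
    using wulff_bounded_below.supp_polar_wulff_pos[OF c]
    by (intro continuous_on_ln wulff_bounded_below.continuous_on_supp_polar_wulff[OF c]) force
qed

theorem entropy_polar_wulff_has_derivative:
  assumes M: "sets M = sets sphere_borel" "finite_measure M"
    and ac: "absolutely_continuous spherical_lebesgue M"
  shows "((\<lambda>t. gen_entropy M (polar (wulff (sphere 0 1) (h t)))) has_real_derivative
           (\<integral>v. g (rev_radial_gauss K v) \<partial>M)) (at 0)"
proof -
  obtain L where L: "\<And>v t. v \<in> sphere 0 1 \<Longrightarrow> v \<notin> singular_dirs K \<Longrightarrow> \<bar>t\<bar> < \<delta> \<Longrightarrow>
    \<bar>log_supp t v - log_supp 0 v\<bar> \<le> L * \<bar>t\<bar>" using log_supp_lipschitz by blast
  have "AE v in M. v \<notin> singular_dirs K \<inter> sphere 0 1"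
    using AE_not_in[OF singular_dirs_sphere_null[OF ac]] .
  then have regular: "AE v in M. v \<in> sphere 0 1 \<and> v \<notin> singular_dirs K"
    using AE_space[of M] by eventually_elim (use space_eq_sphere[OF M(1)] in auto)
  have lim: "AE v in M. ((\<lambda>t. (log_supp t v - log_supp 0 v) / t) \<longlongrightarrow> - g (rev_radial_gauss K v)) (at 0)"
    using regular by eventually_elim (auto intro: log_supp_diff_quotient_tendsto)
  have lip: "AE v in M. \<forall>t. \<bar>t\<bar> < \<delta> \<longrightarrow> \<bar>log_supp t v - log_supp 0 v\<bar> \<le> L * \<bar>t\<bar>"
    using regular by eventually_elim (auto intro: L)
  have "g \<circ> rev_radial_gauss K \<in> borel_measurable M"
    using measurable_comp[OF rev_radial_gauss_measurable
        borel_measurable_continuous_on_sphere[OF refl continuous_g]] measurable_cong_sets[OF M(1) refl]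
    by blast
  then have meas: "(\<lambda>v. - g (rev_radial_gauss K v)) \<in> borel_measurable M" by (simp add: comp_def)
  have integrable: "integrable M (log_supp t)" if "\<bar>t\<bar> < \<delta>" for t
    by (rule integrable_continuous_on_sphere[OF M continuous_on_log_supp[OF that]])
  from DERIV_minus[OF integral_has_real_derivative_dominated[OF M(2) delta_pos integrable meas lim lip]]
  show ?thesis by (simp add: gen_entropy_def log_supp_def)
qed

end

lemma ln_powr_perturbation_bound:
  fixes a p s :: real
  assumes a: "0 < a" and p: "p \<noteq> 0" and s: "\<bar>s\<bar> \<le> 1 / 2"
  shows "\<bar>ln ((a powr (- p) * (1 + s)) powr (1 / p)) + ln a - s / p\<bar> \<le> 2 * s\<^sup>2 / \<bar>p\<bar>"
proof -
  have "0 < 1 + s" using s by linarith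
  then have "ln (a powr (- p) * (1 + s)) = - p * ln a + ln (1 + s)"
    using a by (subst ln_mult) (simp_all add: ln_powr)
  then have "ln ((a powr (- p) * (1 + s)) powr (1 / p)) + ln a - s / p = (ln (1 + s) - s) / p"
    using a \<open>0 < 1 + s\<close> p by (simp add: ln_powr field_simps)
  also have "\<bar>\<dots>\<bar> \<le> 2 * s\<^sup>2 / \<bar>p\<bar>"
    unfolding abs_divide using p by (intro divide_right_mono abs_ln_one_plus_x_minus_x_bound s) simp_all
  finally show ?thesis .
qed

context convex_body_balls
begin

lemma integral_gauss_image_measure:
  fixes f :: "'a \<Rightarrow> real"
  assumes M: "sets M = sets sphere_borel" and ac: "absolutely_continuous spherical_lebesgue M"
    and f: "f \<in> borel_measurable sphere_borel"
  shows "(\<integral>u. f u \<partial>gauss_image_measure M K) = (\<integral>v. f (rev_radial_gauss K v) \<partial>M)"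
proof -
  have "rev_radial_gauss K \<in> M \<rightarrow>\<^sub>M sphere_borel"
    using rev_radial_gauss_measurable measurable_cong_sets[OF M refl] by blast
  then show ?thesis unfolding gauss_image_measure_eq_distr[OF M ac] using f by (rule integral_distr)
qed

lemma integral_lp_gauss_image_measure:
  fixes f :: "'a \<Rightarrow> real"
  assumes M: "sets M = sets sphere_borel" and ac: "absolutely_continuous spherical_lebesgue M"
    and f: "f \<in> borel_measurable sphere_borel"
  shows "(\<integral>u. f u \<partial>lp_gauss_image_measure p M K)
       = (\<integral>v. radial K (rev_radial_gauss K v) powr p * f (rev_radial_gauss K v) \<partial>M)"
proof -
  have "radial K \<in> borel_measurable sphere_borel"
    by (rule borel_measurable_continuous_on_sphere[OF refl continuous_on_radial])
  then have "(\<integral>u. f u \<partial>lp_gauss_image_measure p M K)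
      = (\<integral>u. radial K u powr p * f u \<partial>gauss_image_measure M K)"
    unfolding lp_gauss_image_measure_def gauss_image_measure_eq_distr[OF M ac]
    using f by (subst integral_density) auto
  also have "\<dots> = (\<integral>v. radial K (rev_radial_gauss K v) powr p * f (rev_radial_gauss K v) \<partial>M)"
    using \<open>radial K \<in> borel_measurable sphere_borel\<close> f by (intro integral_gauss_image_measure[OF M ac]) auto
  finally show ?thesis .
qed

lemma supp_polar_powr: "u \<in> sphere 0 1 \<Longrightarrow> supp (polar K) u powr p = radial K u powr (- p)"
  using supp_polar radial_pos by (simp add: powr_minus_divide powr_divide)

lemma lp_harm_comb_eq_polar_wulff:
  assumes L: "convex_body_balls L r' R'" and "p \<noteq> 0"
  shows "lp_harm_comb p K t L = polar (wulff (sphere 0 1)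
           (\<lambda>x. (radial K x powr (- p) + t * radial L x powr (- p)) powr (1 / p)))"
  unfolding lp_harm_comb_def lp_comb_def using assms(2)
  by (auto intro!: arg_cong[where f = polar] wulff_cong
      simp: supp_polar_powr convex_body_balls.supp_polar_powr[OF L])

lemma log_harm_comb_eq_polar_wulff:
  assumes L: "convex_body_balls L r' R'"
  shows "lp_harm_comb 0 K t L = polar (wulff (sphere 0 1) (\<lambda>x. (1 / radial K x) * (1 / radial L x) powr t))"
  unfolding lp_harm_comb_def lp_comb_def
  by (auto intro!: arg_cong[where f = polar] wulff_cong simp: supp_polar convex_body_balls.supp_polar[OF L])

lemma lp_entropy_variation:
  assumes L: "convex_body_balls L r' R'" and p: "p \<noteq> 0"
  obtains \<delta> C where "entropy_variation K r R
    (\<lambda>t x. (radial K x powr (- p) + t * radial L x powr (- p)) powr (1 / p))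
    (\<lambda>x. (1 / p) * (radial K x powr p * radial L x powr (- p))) \<delta> C"
proof -
  let ?S = "sphere (0::'a) 1"
  define q where "q x = radial K x powr p * radial L x powr (- p)" for x
  have \<rho>L: "continuous_on ?S (radial L)" "\<And>x. x \<in> ?S \<Longrightarrow> 0 < radial L x"
    using convex_body_balls.continuous_on_radial[OF L] convex_body_balls.radial_pos[OF L] by auto
  have q: "continuous_on ?S q"
    unfolding q_def using radial_pos \<rho>L
    by (intro continuous_intros continuous_on_radial) (auto simp: less_le)
  obtain Q where Q: "0 \<le> Q" "\<And>x. x \<in> ?S \<Longrightarrow> \<bar>q x\<bar> \<le> Q"
    using continuous_on_sphere_bounded[OF q] by blast
  define \<delta> where "\<delta> = 1 / (2 * Q + 2)"
  have tq: "\<bar>t * q x\<bar> \<le> 1 / 2" if "\<bar>t\<bar> < \<delta>" "x \<in> ?S" for t x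
  proof -
    have "\<bar>t * q x\<bar> \<le> \<delta> * Q" using that Q by (simp add: abs_mult mult_mono)
    also have "\<dots> \<le> 1 / 2" using Q(1) by (simp add: \<delta>_def field_simps)
    finally show ?thesis .
  qed
  have split: "radial K x powr (- p) + t * radial L x powr (- p) = radial K x powr (- p) * (1 + t * q x)"
    if "x \<in> ?S" for t x
    using radial_pos[OF that] \<rho>L(2)[OF that] by (simp add: q_def powr_minus field_simps)
  show ?thesis
  proof (rule that, unfold_locales)
    show "0 < \<delta>" using Q(1) by (simp add: \<delta>_def)
    show "0 \<le> 2 * Q\<^sup>2 / \<bar>p\<bar>" by simp
    fix t x assume t: "\<bar>t\<bar> < \<delta>" and x: "x \<in> ?S"
    show "0 < (radial K x powr (- p) + t * radial L x powr (- p)) powr (1 / p)"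
      using split[OF x] radial_pos[OF x] tq[OF t x] by simp
    have "\<bar>ln ((radial K x powr (- p) * (1 + t * q x)) powr (1 / p)) + ln (radial K x) - t * q x / p\<bar>
        \<le> 2 * (t * q x)\<^sup>2 / \<bar>p\<bar>"
      by (rule ln_powr_perturbation_bound[OF radial_pos[OF x] p tq[OF t x]])
    also have "\<dots> \<le> 2 * Q\<^sup>2 / \<bar>p\<bar> * t\<^sup>2"
    proof -
      have "(q x)\<^sup>2 \<le> Q\<^sup>2" using power_mono[OF Q(2)[OF x] abs_ge_zero, of 2] by simp
      from mult_left_mono[OF this, of "2 * t\<^sup>2 / \<bar>p\<bar>"]
      show ?thesis by (simp add: power_mult_distrib algebra_simps)
    qed
    finally show "\<bar>ln ((radial K x powr (- p) + t * radial L x powr (- p)) powr (1 / p)) + ln (radial K x)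
        - t * ((1 / p) * (radial K x powr p * radial L x powr (- p)))\<bar> \<le> 2 * Q\<^sup>2 / \<bar>p\<bar> * t\<^sup>2"
      by (simp add: split[OF x] q_def)
  next
    show "continuous_on ?S (\<lambda>x. 1 / p * (radial K x powr p * radial L x powr - p))"
      using q unfolding q_def by (rule continuous_on_mult_left)
  qed
qed

lemma log_entropy_variation:
  assumes L: "convex_body_balls L r' R'"
  shows "entropy_variation K r R (\<lambda>t x. (1 / radial K x) * (1 / radial L x) powr t)
           (\<lambda>x. - ln (radial L x)) 1 0"
proof unfold_locales
  fix t and x :: 'a assume x: "x \<in> sphere 0 1"
  show "0 < (1 / radial K x) * (1 / radial L x) powr t"
    and "\<bar>ln ((1 / radial K x) * (1 / radial L x) powr t) + ln (radial K x) - t * - ln (radial L x)\<bar> \<le> 0 * t\<^sup>2"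
    using radial_pos[OF x] convex_body_balls.radial_pos[OF L x] by (simp_all add: ln_mult ln_powr ln_div)
next
  show "continuous_on (sphere 0 1) (\<lambda>x. - ln (radial L x))"
    using convex_body_balls.continuous_on_radial[OF L] convex_body_balls.radial_pos[OF L]
    by (intro continuous_intros) force+
qed auto

end

theorem entropy_lp_harm_comb_has_derivative:
  fixes M :: "'a::euclidean_space measure"
  assumes M: "sets M = sets sphere_borel" "finite_measure M" "absolutely_continuous spherical_lebesgue M"
    and K: "convex_body0 K" and L: "convex_body0 L" and p: "p \<noteq> 0"
  shows "((\<lambda>t. gen_entropy M (lp_harm_comb p K t L)) has_real_derivative
           (1 / p) * (\<integral>u. radial L u powr (- p) \<partial>lp_gauss_image_measure p M K)) (at 0)"
proof -
  obtain r R where K': "convex_body_balls K r R" using convex_body_balls_exists[OF K] by blast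
  obtain r' R' where L': "convex_body_balls L r' R'" using convex_body_balls_exists[OF L] by blast
  let ?\<alpha> = "rev_radial_gauss K"
  obtain \<delta> C where "entropy_variation K r R
      (\<lambda>t x. (radial K x powr (- p) + t * radial L x powr (- p)) powr (1 / p))
      (\<lambda>x. (1 / p) * (radial K x powr p * radial L x powr (- p))) \<delta> C"
    using convex_body_balls.lp_entropy_variation[OF K' L' p] by blast
  from entropy_variation.entropy_polar_wulff_has_derivative[OF this M]
  have "((\<lambda>t. gen_entropy M (lp_harm_comb p K t L)) has_real_derivative
      (\<integral>v. (1 / p) * (radial K (?\<alpha> v) powr p * radial L (?\<alpha> v) powr (- p)) \<partial>M)) (at 0)"
    by (simp add: convex_body_balls.lp_harm_comb_eq_polar_wulff[OF K' L' p])
  moreover have "radial L \<in> borel_measurable sphere_borel"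
    by (rule borel_measurable_continuous_on_sphere[OF refl convex_body_balls.continuous_on_radial[OF L']])
  ultimately show ?thesis
    using convex_body_balls.integral_lp_gauss_image_measure[OF K' M(1,3)] by simp
qed

theorem entropy_log_harm_comb_has_derivative:
  fixes M :: "'a::euclidean_space measure"
  assumes M: "sets M = sets sphere_borel" "finite_measure M" "absolutely_continuous spherical_lebesgue M"
    and K: "convex_body0 K" and L: "convex_body0 L"
  shows "((\<lambda>t. gen_entropy M (lp_harm_comb 0 K t L)) has_real_derivative
           - (\<integral>u. ln (radial L u) \<partial>gauss_image_measure M K)) (at 0)"
proof -
  obtain r R where K': "convex_body_balls K r R" using convex_body_balls_exists[OF K] by blast
  obtain r' R' where L': "convex_body_balls L r' R'" using convex_body_balls_exists[OF L] by blast
  from entropy_variation.entropy_polar_wulff_has_derivative[OF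
      convex_body_balls.log_entropy_variation[OF K' L'] M]
  have "((\<lambda>t. gen_entropy M (lp_harm_comb 0 K t L)) has_real_derivative
      (\<integral>v. - ln (radial L (rev_radial_gauss K v)) \<partial>M)) (at 0)"
    by (simp add: convex_body_balls.log_harm_comb_eq_polar_wulff[OF K' L'])
  moreover have "radial L \<in> borel_measurable sphere_borel"
    by (rule borel_measurable_continuous_on_sphere[OF refl convex_body_balls.continuous_on_radial[OF L']])
  ultimately show ?thesis
    using convex_body_balls.integral_gauss_image_measure[OF K' M(1,3)] by simp
qed

theorem lemma4p3:
  fixes M :: "'a::euclidean_space measure" and K L :: "'a set"
  assumes "sets M = sets sphere_borel"
    and "finite_measure M"
    and "absolutely_continuous spherical_lebesgue M"
    and "convex_body0 K" and "convex_body0 L"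
  shows "(\<forall>p::real. p \<noteq> 0 \<longrightarrow>
            ((\<lambda>t. gen_entropy M (lp_harm_comb p K t L)) has_real_derivative
               (1 / p) * (\<integral>u. radial L u powr (- p) \<partial>(lp_gauss_image_measure p M K))) (at 0))
       \<and> ((\<lambda>t. gen_entropy M (lp_harm_comb 0 K t L)) has_real_derivative
               - (\<integral>u. ln (radial L u) \<partial>(gauss_image_measure M K))) (at 0)"
  using entropy_lp_harm_comb_has_derivative[OF assms] entropy_log_harm_comb_has_derivative[OF assms]
  by blast

end
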